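(* Within the pseudovariety $\mathsf S$ of all finite semigroups, each of the sets of pseudoidentities $\Sigma=\{(xyx)^\omega=x^\omega,\ x^{\omega+1}=x\}$ and $\Gamma=\{(xy)^\omega x=x\}$ is h-strong.
   Context: $\mathsf S$ is the pseudovariety of finite semigroups (signature: multiplication); $\Omega_A\mathsf S$ is the free profinite semigroup on a finite set $A$. In a profinite semigroup $x^\omega=\lim x^{n!}$ and $x^{\omega+1}=x^\omega x$. An $\mathsf S$-pseudoidentity is $u=v$ with $u,v\in\Omega_B\mathsf S$, $B$ finite; it holds in a finite semigroup $T$ if both sides agree under every continuous homomorphism $\Omega_B\mathsf S\to T$; $[\![\Sigma]\!]$ is the class of finite semigroups satisfying $\Sigma$. Provability: for finite $A$, $\Sigma_0\subseteq\Omega_A\mathsf S\times\Omega_A\mathsf S$ is the set of pairs $(\mathbf t(\varphi(u),w_1,\dots,w_n),\mathbf t(\varphi(v),w_1,\dots,w_n))$ with $u=v$ or $v=u$ in $\Sigma$ ($u,v\in\Omega_B\mathsf S$), $\varphi:\Omega_B\mathsf S\to\Omega_A\mathsf S$ a continuous homomorphism, $\mathbf t$ a semigroup term, $w_i\in\Omega_A\mathsf S$; $\Sigma_{2\alpha+1}$ is the transitive closure of $\Sigma_{2\alpha}$, $\Sigma_{2\alpha+2}$ the topological closure of $\Sigma_{2\alpha+1}$, unions at limit ordinals; $u=v$ is provable from $\Sigma$ if $(u,v)\in\bigcup_\alpha\Sigma_\alpha$. $\Sigma$ is h-strong within $\mathsf S$ if every $\mathsf S$-pseudoidentity valid in $[\![\Sigma]\!]$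 is provable from $\Sigma$. *)

theory Defs
  imports "HOL-Analysis.Analysis" "HOL-Library.FuncSet"
begin

text \<open>Every finite semigroup is isomorphic to one whose carrier is a subset of nat,
  so finite semigroups are represented as pairs (carrier, multiplication).\<close>

type_synonym fsg = "nat set \<times> (nat \<Rightarrow> nat \<Rightarrow> nat)"

definition fin_sg :: "fsg \<Rightarrow> bool" where
  "fin_sg S \<longleftrightarrow> finite (fst S)
     \<and> (\<forall>x\<in>fst S. \<forall>y\<in>fst S. snd S x y \<in> fst S)
     \<and> (\<forall>x\<in>fst S. \<forall>y\<in>fst S. \<forall>z\<in>fst S. snd S (snd S x y) z = snd S x (snd S y z))"

definition sg_hom :: "fsg \<Rightarrow> fsg \<Rightarrow> (nat \<Rightarrow> nat) \<Rightarrow> bool" where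
  "sg_hom S T h \<longleftrightarrow> (\<forall>x\<in>fst S. h x \<in> fst T)
     \<and> (\<forall>x\<in>fst S. \<forall>y\<in>fst S. h (snd S x y) = snd T (h x) (h y))"

text \<open>An element of the free profinite semigroup over A (an A-ary implicit operation on S):
  for each finite semigroup S and each assignment A \<rightarrow> S, an element of S,
  natural with respect to all semigroup homomorphisms.\<close>

type_synonym 'a pw = "fsg \<Rightarrow> ('a \<Rightarrow> nat) \<Rightarrow> nat"

definition adm :: "'a set \<Rightarrow> fsg \<Rightarrow> ('a \<Rightarrow> nat) \<Rightarrow> bool" where
  "adm A S \<phi> \<longleftrightarrow> fin_sg S \<and> \<phi> \<in> A \<rightarrow>\<^sub>E fst S"

definition Omega :: "'a set \<Rightarrow> 'a pw set" where
  "Omega A = {w. (\<forall>S \<phi>. adm A S \<phi> \<longrightarrow> w S \<phi> \<in> fst S)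
      \<and> (\<forall>S \<phi>. \<not> adm A S \<phi> \<longrightarrow> w S \<phi> = 0)
      \<and> (\<forall>S T h \<phi>. adm A S \<phi> \<and> fin_sg T \<and> sg_hom S T h
            \<longrightarrow> h (w S \<phi>) = w T (restrict (h \<circ> \<phi>) A))}"

definition pmul :: "'a set \<Rightarrow> 'a pw \<Rightarrow> 'a pw \<Rightarrow> 'a pw" where
  "pmul A u v = (\<lambda>S \<phi>. if adm A S \<phi> then snd S (u S \<phi>) (v S \<phi>) else 0)"

definition gen :: "'a set \<Rightarrow> 'a \<Rightarrow> 'a pw" where
  "gen A a = (\<lambda>S \<phi>. if adm A S \<phi> then \<phi> a else 0)"

text \<open>Profinite topology: the coarsest topology making all evaluation maps
  (i.e. all continuous homomorphisms into finite discrete semigroups) continuous.\<close>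

definition omega_top :: "'a set \<Rightarrow> 'a pw topology" where
  "omega_top A = topology_generated_by
     (insert (Omega A) {{w \<in> Omega A. w S \<phi> = c} | S \<phi> c. adm A S \<phi>})"

text \<open>ppow A u n = u^(n+1)\<close>
fun ppow :: "'a set \<Rightarrow> 'a pw \<Rightarrow> nat \<Rightarrow> 'a pw" where
  "ppow A u 0 = u"
| "ppow A u (Suc n) = pmul A (ppow A u n) u"

definition omega :: "'a set \<Rightarrow> 'a pw \<Rightarrow> 'a pw" where
  "omega A u = (THE w. limitin (omega_top A) (\<lambda>n. ppow A u (fact n - 1)) w sequentially)"

definition cont_hom :: "'b set \<Rightarrow> 'a set \<Rightarrow> ('b pw \<Rightarrow> 'a pw) \<Rightarrow> bool" where
  "cont_hom B A f \<longleftrightarrow> f \<in> Omega B \<rightarrow> Omega A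
     \<and> continuous_map (omega_top B) (omega_top A) f
     \<and> (\<forall>u\<in>Omega B. \<forall>v\<in>Omega B. f (pmul B u v) = pmul A (f u) (f v))"

text \<open>A pseudoidentity is (B, u, v) with u, v in Omega B.\<close>

definition holds_in :: "fsg \<Rightarrow> 'b set \<Rightarrow> 'b pw \<Rightarrow> 'b pw \<Rightarrow> bool" where
  "holds_in T B u v \<longleftrightarrow>
     (\<forall>h. h \<in> Omega B \<rightarrow> fst T
        \<and> continuous_map (omega_top B) (discrete_topology (fst T)) h
        \<and> (\<forall>x\<in>Omega B. \<forall>y\<in>Omega B. h (pmul B x y) = snd T (h x) (h y))
        \<longrightarrow> h u = h v)"

definition models :: "fsg \<Rightarrow> ('b set \<times> 'b pw \<times> 'b pw) set \<Rightarrow> bool" where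
  "models T \<Sigma> \<longleftrightarrow> fin_sg T \<and> (\<forall>(B, u, v) \<in> \<Sigma>. holds_in T B u v)"

datatype sg_term = TVar nat | TMul sg_term sg_term

fun teval :: "'a set \<Rightarrow> (nat \<Rightarrow> 'a pw) \<Rightarrow> sg_term \<Rightarrow> 'a pw" where
  "teval A \<rho> (TVar i) = \<rho> i"
| "teval A \<rho> (TMul s t) = pmul A (teval A \<rho> s) (teval A \<rho> t)"

text \<open>Sigma_0: instances t(phi(u), w_1, ..., w_n) = t(phi(v), w_1, ..., w_n); variable 0
  of the term t is the distinguished one, the others receive the w_i.\<close>

definition Sigma0 :: "('b set \<times> 'b pw \<times> 'b pw) set \<Rightarrow> 'a set \<Rightarrow> ('a pw \<times> 'a pw) set" where
  "Sigma0 \<Sigma> A = {(teval A (\<rho>(0 := f u)) t, teval A (\<rho>(0 := f v)) t) | B u v f \<rho> t.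
      ((B, u, v) \<in> \<Sigma> \<or> (B, v, u) \<in> \<Sigma>) \<and> cont_hom B A f \<and> (\<forall>i. \<rho> i \<in> Omega A)}"

text \<open>The union of the transfinite chain (alternating transitive and topological closure)
  is the least relation containing Sigma_0 that is transitive and topologically closed.\<close>

definition provable_rel :: "('b set \<times> 'b pw \<times> 'b pw) set \<Rightarrow> 'a set \<Rightarrow> ('a pw \<times> 'a pw) set" where
  "provable_rel \<Sigma> A = \<Inter>{R. Sigma0 \<Sigma> A \<subseteq> R \<and> trans R
      \<and> (prod_topology (omega_top A) (omega_top A)) closure_of R \<subseteq> R}"

definition h_strong :: "('b set \<times> 'b pw \<times> 'b pw) set \<Rightarrow> bool" where
  "h_strong \<Sigma> \<longleftrightarrow> (\<forall>(A :: nat set) u v. finite A \<and> u \<in> Omega A \<and> v \<in> Omega A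
       \<and> (\<forall>T. models T \<Sigma> \<longrightarrow> holds_in T A u v)
       \<longrightarrow> (u, v) \<in> provable_rel \<Sigma> A)"

definition Bxy :: "nat set" where "Bxy = {0, 1}"

definition SigmaPI :: "(nat set \<times> nat pw \<times> nat pw) set" where
  "SigmaPI = (let x = gen Bxy 0; y = gen Bxy 1 in
     {(Bxy, omega Bxy (pmul Bxy (pmul Bxy x y) x), omega Bxy x),
      (Bxy, pmul Bxy (omega Bxy x) x, x)})"

definition GammaPI :: "(nat set \<times> nat pw \<times> nat pw) set" where
  "GammaPI = (let x = gen Bxy 0; y = gen Bxy 1 in
     {(Bxy, pmul Bxy (omega Bxy (pmul Bxy x y)) x, x)})"

end

theory Submission
  imports Defs "HOL-Library.Nat_Bijection"
begin

text \<open>Both \<open>\<Sigma>\<close> and \<open>\<Gamma>\<close> hold in every rectangular band, and both prove \<open>(xy)\<^sup>\<omega>x = x\<close> (for \<open>\<Sigma>\<close> by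
  a short derivation). These two facts suffice for h-strongness. Write \<open>\<turnstile>\<close> for provability over
  \<open>A\<close>. For an evaluation \<open>(S, \<phi>)\<close> of \<open>Omega A\<close> fine enough to determine first and last letters,
  the relation \<open>\<turnstile> \<circ> ker (S, \<phi>) \<circ> \<turnstile>\<close> is transitive, because \<open>(xy)\<^sup>\<omega>x = x\<close> lets \<open>\<omega>\<close>-powers absorb
  the two middle terms. So it is a congruence of finite index, and its quotient is a finite model
  of \<open>\<Sigma>\<close>; hence it contains every pair \<open>(u, v)\<close> valid in all models. Since \<open>\<turnstile>\<close> is closed and
  \<open>Omega A\<close> is compact, a pair lying in all these relations is already provable.\<close>

section \<open>Implicit operations\<close>

lemma OmegaD:
  assumes "w \<in> Omega A"
  shows "adm A S \<phi> \<Longrightarrow> w S \<phi> \<in> fst S"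
    and "\<not> adm A S \<phi> \<Longrightarrow> w S \<phi> = 0"
    and "adm A S \<phi> \<Longrightarrow> fin_sg T \<Longrightarrow> sg_hom S T h \<Longrightarrow> h (w S \<phi>) = w T (restrict (h \<circ> \<phi>) A)"
  using assms unfolding Omega_def by blast+

lemma Omega_eqI:
  assumes "u \<in> Omega A" "v \<in> Omega A" "\<And>S \<phi>. adm A S \<phi> \<Longrightarrow> u S \<phi> = v S \<phi>"
  shows "u = v"
proof (intro ext)
  fix S \<phi> show "u S \<phi> = v S \<phi>"
    using assms OmegaD(2)[OF assms(1)] OmegaD(2)[OF assms(2)] by (cases "adm A S \<phi>") auto
qed

lemma fin_sgD:
  assumes "fin_sg S"
  shows "finite (fst S)" "x \<in> fst S \<Longrightarrow> y \<in> fst S \<Longrightarrow> snd S x y \<in> fst S"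
    "x \<in> fst S \<Longrightarrow> y \<in> fst S \<Longrightarrow> z \<in> fst S \<Longrightarrow> snd S (snd S x y) z = snd S x (snd S y z)"
  using assms unfolding fin_sg_def by blast+

lemma admD: assumes "adm A S \<phi>" shows "fin_sg S" "\<phi> \<in> A \<rightarrow>\<^sub>E fst S"
  using assms unfolding adm_def by auto

lemma adm_hom_comp:
  assumes "adm A S \<phi>" "fin_sg T" "sg_hom S T h"
  shows "adm A T (restrict (h \<circ> \<phi>) A)"
  using assms unfolding adm_def sg_hom_def by (auto simp: PiE_def Pi_def)

lemma pmul_adm: "adm A S \<phi> \<Longrightarrow> pmul A u v S \<phi> = snd S (u S \<phi>) (v S \<phi>)"
  by (simp add: pmul_def)

lemma gen_adm: "adm A S \<phi> \<Longrightarrow> gen A a S \<phi> = \<phi> a"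
  by (simp add: gen_def)

lemma pmul_Omega:
  assumes u: "u \<in> Omega A" and v: "v \<in> Omega A"
  shows "pmul A u v \<in> Omega A"
  unfolding Omega_def
proof (intro CollectI conjI allI impI)
  fix S \<phi> assume "adm A S \<phi>"
  then show "pmul A u v S \<phi> \<in> fst S"
    using fin_sgD(2)[OF admD(1)] OmegaD(1)[OF u] OmegaD(1)[OF v] by (simp add: pmul_adm) blast
next
  fix S \<phi> assume "\<not> adm A S \<phi>" then show "pmul A u v S \<phi> = 0" by (simp add: pmul_def)
next
  fix S T h \<phi> assume "adm A S \<phi> \<and> fin_sg T \<and> sg_hom S T h"
  then have a: "adm A S \<phi>" "fin_sg T" "sg_hom S T h" by auto
  have "h (pmul A u v S \<phi>) = snd T (h (u S \<phi>)) (h (v S \<phi>))"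
    using a OmegaD(1)[OF u a(1)] OmegaD(1)[OF v a(1)] by (simp add: pmul_adm sg_hom_def)
  also have "\<dots> = pmul A u v T (restrict (h \<circ> \<phi>) A)"
    using adm_hom_comp[OF a] OmegaD(3)[OF u a] OmegaD(3)[OF v a] by (simp add: pmul_adm)
  finally show "h (pmul A u v S \<phi>) = pmul A u v T (restrict (h \<circ> \<phi>) A)" .
qed

lemma pmul_assoc:
  assumes "u \<in> Omega A" "v \<in> Omega A" "w \<in> Omega A"
  shows "pmul A (pmul A u v) w = pmul A u (pmul A v w)"
proof (rule Omega_eqI)
  show "pmul A (pmul A u v) w \<in> Omega A" "pmul A u (pmul A v w) \<in> Omega A"
    using assms by (auto intro: pmul_Omega)
  fix S \<phi> assume a: "adm A S \<phi>"
  show "pmul A (pmul A u v) w S \<phi> = pmul A u (pmul A v w) S \<phi>"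
    using fin_sgD(3)[OF admD(1)[OF a]] OmegaD(1)[OF _ a] assms by (simp add: pmul_adm a)
qed

lemma gen_Omega:
  assumes "a \<in> A" shows "gen A a \<in> Omega A"
  unfolding Omega_def
proof (intro CollectI conjI allI impI)
  fix S \<phi> assume "adm A S \<phi>" then show "gen A a S \<phi> \<in> fst S"
    using assms by (auto simp: gen_def adm_def)
next
  fix S \<phi> assume "\<not> adm A S \<phi>" then show "gen A a S \<phi> = 0" by (simp add: gen_def)
next
  fix S T h \<phi> assume "adm A S \<phi> \<and> fin_sg T \<and> sg_hom S T h"
  then show "h (gen A a S \<phi>) = gen A a T (restrict (h \<circ> \<phi>) A)"
    using adm_hom_comp[of A S \<phi> T h] assms by (simp add: gen_adm)
qed

inductive_set words :: "'a set \<Rightarrow> 'a pw set" for A where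
  words_gen: "a \<in> A \<Longrightarrow> gen A a \<in> words A"
| words_mul: "x \<in> words A \<Longrightarrow> y \<in> words A \<Longrightarrow> pmul A x y \<in> words A"

lemma words_Omega: "t \<in> words A \<Longrightarrow> t \<in> Omega A"
  by (induction rule: words.induct) (auto intro: gen_Omega pmul_Omega)

definition ev_refines :: "'a set \<Rightarrow> fsg \<Rightarrow> ('a \<Rightarrow> nat) \<Rightarrow> fsg \<Rightarrow> ('a \<Rightarrow> nat) \<Rightarrow> bool" where
  "ev_refines A S \<phi> S' \<phi>' \<longleftrightarrow>
     (\<forall>x\<in>Omega A. \<forall>y\<in>Omega A. x S \<phi> = y S \<phi> \<longrightarrow> x S' \<phi>' = y S' \<phi>')"

lemma ev_refines_refl: "ev_refines A S \<phi> S \<phi>"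
  by (simp add: ev_refines_def)

lemma ev_refines_trans:
  "ev_refines A S \<phi> S' \<phi>' \<Longrightarrow> ev_refines A S' \<phi>' S'' \<phi>'' \<Longrightarrow> ev_refines A S \<phi> S'' \<phi>''"
  by (simp add: ev_refines_def)

lemma ev_refinesD:
  "ev_refines A S \<phi> S' \<phi>' \<Longrightarrow> x \<in> Omega A \<Longrightarrow> y \<in> Omega A \<Longrightarrow> x S \<phi> = y S \<phi> \<Longrightarrow> x S' \<phi>' = y S' \<phi>'"
  by (simp add: ev_refines_def)

definition sg_prod :: "fsg \<Rightarrow> fsg \<Rightarrow> fsg" where
  "sg_prod S1 S2 = (prod_encode ` (fst S1 \<times> fst S2),
     \<lambda>x y. prod_encode (snd S1 (fst (prod_decode x)) (fst (prod_decode y)),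
                        snd S2 (snd (prod_decode x)) (snd (prod_decode y))))"

lemma fin_sg_sg_prod: "fin_sg S1 \<Longrightarrow> fin_sg S2 \<Longrightarrow> fin_sg (sg_prod S1 S2)"
  unfolding fin_sg_def sg_prod_def by auto

lemma sg_hom_sg_prod:
  assumes "fin_sg S1" "fin_sg S2"
  shows "sg_hom (sg_prod S1 S2) S1 (\<lambda>x. fst (prod_decode x))"
    and "sg_hom (sg_prod S1 S2) S2 (\<lambda>x. snd (prod_decode x))"
  using assms unfolding sg_hom_def sg_prod_def by auto

lemma ev_refines_common:
  assumes a1: "adm A S1 \<phi>1" and a2: "adm A S2 \<phi>2"
  obtains S \<phi> where "adm A S \<phi>" "ev_refines A S \<phi> S1 \<phi>1" "ev_refines A S \<phi> S2 \<phi>2"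
proof
  let ?S = "sg_prod S1 S2" and ?\<phi> = "restrict (\<lambda>a. prod_encode (\<phi>1 a, \<phi>2 a)) A"
  have S: "fin_sg S1" "fin_sg S2" using admD(1)[OF a1] admD(1)[OF a2] .
  show a: "adm A ?S ?\<phi>"
    using a1 a2 fin_sg_sg_prod[OF S] unfolding adm_def sg_prod_def by (auto simp: PiE_def Pi_def)
  have "restrict ((\<lambda>x. fst (prod_decode x)) \<circ> ?\<phi>) A = \<phi>1"
    "restrict ((\<lambda>x. snd (prod_decode x)) \<circ> ?\<phi>) A = \<phi>2"
    using admD(2)[OF a1] admD(2)[OF a2] by (auto simp: PiE_def extensional_def)
  then show "ev_refines A ?S ?\<phi> S1 \<phi>1" "ev_refines A ?S ?\<phi> S2 \<phi>2"
    unfolding ev_refines_def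
    using OmegaD(3)[OF _ a S(1) sg_hom_sg_prod(1)[OF S]] OmegaD(3)[OF _ a S(2) sg_hom_sg_prod(2)[OF S]]
    by metis+
qed

text \<open>Density of words: evaluate in the subsemigroup generated by the images of the generators.\<close>

inductive_set sg_generated :: "fsg \<Rightarrow> nat set \<Rightarrow> nat set" for S X where
  sg_generated_base: "x \<in> X \<Longrightarrow> x \<in> sg_generated S X"
| sg_generated_mul: "x \<in> sg_generated S X \<Longrightarrow> y \<in> sg_generated S X \<Longrightarrow> snd S x y \<in> sg_generated S X"

lemma sg_generated_subset:
  assumes "fin_sg S" "X \<subseteq> fst S" shows "sg_generated S X \<subseteq> fst S"
proof
  fix x assume "x \<in> sg_generated S X"
  then show "x \<in> fst S" by (induction rule: sg_generated.induct) (use assms in \<open>auto intro: fin_sgD(2)\<close>)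
qed

lemma fin_sg_sg_generated:
  assumes "fin_sg S" "X \<subseteq> fst S"
  shows "fin_sg (sg_generated S X, snd S)"
proof -
  have G: "sg_generated S X \<subseteq> fst S" by (rule sg_generated_subset[OF assms])
  then have "finite (sg_generated S X)" using fin_sgD(1)[OF assms(1)] finite_subset by blast
  then show ?thesis
    using G fin_sgD(3)[OF assms(1)] unfolding fin_sg_def by (auto intro: sg_generated_mul) (meson subsetD)
qed

lemma sg_generated_words:
  assumes "adm A S \<phi>" "c \<in> sg_generated S (\<phi> ` A)"
  shows "\<exists>t\<in>words A. t S \<phi> = c"
  using assms(2)
proof (induction rule: sg_generated.induct)
  case (sg_generated_base x)
  then obtain a where "a \<in> A" "x = \<phi> a" by blast
  then show ?case using assms(1) by (intro bexI[of _ "gen A a"]) (auto simp: gen_adm intro: words_gen)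
next
  case (sg_generated_mul x y)
  then obtain t1 t2 where "t1 \<in> words A" "t1 S \<phi> = x" "t2 \<in> words A" "t2 S \<phi> = y" by blast
  then show ?case
    using assms(1) by (intro bexI[of _ "pmul A t1 t2"]) (auto simp: pmul_adm intro: words_mul)
qed

lemma words_dense:
  assumes w: "w \<in> Omega A" and a: "adm A S \<phi>"
  obtains t where "t \<in> words A" "t S \<phi> = w S \<phi>"
proof -
  let ?G = "sg_generated S (\<phi> ` A)"
  have S: "fin_sg S" and \<phi>: "\<phi> \<in> A \<rightarrow>\<^sub>E fst S" using admD[OF a] by auto
  have "\<phi> ` A \<subseteq> fst S" using \<phi> by auto
  then have G: "fin_sg (?G, snd S)" "?G \<subseteq> fst S"
    using fin_sg_sg_generated[OF S] sg_generated_subset[OF S] by auto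
  have aG: "adm A (?G, snd S) \<phi>" using G \<phi> unfolding adm_def by (auto intro: sg_generated_base)
  have "sg_hom (?G, snd S) S id" using G(2) unfolding sg_hom_def by auto
  from OmegaD(3)[OF w aG S this] have "w (?G, snd S) \<phi> = w S (restrict \<phi> A)" by simp
  also have "restrict \<phi> A = \<phi>" using \<phi> by (simp add: PiE_restrict)
  finally have "w (?G, snd S) \<phi> = w S \<phi>" .
  moreover have "w (?G, snd S) \<phi> \<in> ?G" using OmegaD(1)[OF w aG] by simp
  ultimately show ?thesis using sg_generated_words[OF a] that by metis
qed

section \<open>The profinite topology\<close>

lemma topspace_omega_top [simp]: "topspace (omega_top A) = Omega A"
  unfolding omega_top_def by auto

lemma openin_omega_top_ev:
  assumes "adm A S \<phi>"
  shows "openin (omega_top A) {w \<in> Omega A. w S \<phi> = c}"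
  unfolding omega_top_def by (rule topology_generated_by_Basis) (use assms in blast)

definition sg_trivial :: fsg where "sg_trivial = ({0}, \<lambda>x y. 0)"

lemma adm_sg_trivial: "adm A sg_trivial (restrict (\<lambda>_. 0) A)"
  unfolding adm_def sg_trivial_def fin_sg_def by auto

text \<open>The sets \<open>{x. x S \<phi> = w S \<phi>}\<close> form a neighbourhood base at \<open>w\<close>: the generating sets
  are of this form and, by \<open>ev_refines_common\<close>, they are closed under finite intersections.\<close>

lemma omega_top_ev_nbhd:
  assumes "openin (omega_top A) U" "w \<in> U"
  obtains S \<phi> where "adm A S \<phi>" "{x \<in> Omega A. x S \<phi> = w S \<phi>} \<subseteq> U"
proof -
  let ?B = "insert (Omega A) {{w \<in> Omega A. w S \<phi> = c} | S \<phi> c. adm A S \<phi>}"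
  have "generate_topology_on ?B U"
    using assms(1) unfolding omega_top_def by (rule openin_topology_generated_by)
  moreover have "w \<in> Omega A" using openin_subset[OF assms(1)] assms(2) by auto
  ultimately have "\<exists>S \<phi>. adm A S \<phi> \<and> {x \<in> Omega A. x S \<phi> = w S \<phi>} \<subseteq> U"
    using assms(2)
  proof (induction arbitrary: w rule: generate_topology_on.induct)
    case (Int a b)
    then obtain S1 \<phi>1 S2 \<phi>2 where
      h: "adm A S1 \<phi>1" "{x \<in> Omega A. x S1 \<phi>1 = w S1 \<phi>1} \<subseteq> a"
         "adm A S2 \<phi>2" "{x \<in> Omega A. x S2 \<phi>2 = w S2 \<phi>2} \<subseteq> b" by blast
    obtain S \<phi> where "adm A S \<phi>" "ev_refines A S \<phi> S1 \<phi>1" "ev_refines A S \<phi> S2 \<phi>2"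
      using ev_refines_common[OF h(1) h(3)] .
    then show ?case using h Int.prems by (intro exI[of _ S] exI[of _ \<phi>]) (auto dest: ev_refinesD)
  next
    case (UN K)
    then show ?case by blast
  next
    case (Basis s)
    then show ?case using adm_sg_trivial by blast
  qed simp
  then show ?thesis using that by blast
qed

definition ev_saturated :: "'a set \<Rightarrow> fsg \<Rightarrow> ('a \<Rightarrow> nat) \<Rightarrow> 'a pw set \<Rightarrow> bool" where
  "ev_saturated A S \<phi> C \<longleftrightarrow> C \<subseteq> Omega A \<and> (\<forall>x\<in>C. \<forall>y\<in>Omega A. y S \<phi> = x S \<phi> \<longrightarrow> y \<in> C)"

lemma openin_ev_saturated:
  assumes "adm A S \<phi>" "ev_saturated A S \<phi> C"
  shows "openin (omega_top A) C"
proof -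
  have "C = (\<Union>x\<in>C. {y \<in> Omega A. y S \<phi> = x S \<phi>})"
    using assms(2) unfolding ev_saturated_def by blast
  moreover have "openin (omega_top A) (\<Union>x\<in>C. {y \<in> Omega A. y S \<phi> = x S \<phi>})"
    using openin_omega_top_ev[OF assms(1)] by (intro openin_Union) auto
  ultimately show ?thesis by simp
qed

lemma closedin_ev_saturated:
  assumes a: "adm A S \<phi>" and C: "ev_saturated A S \<phi> C"
  shows "closedin (omega_top A) C"
proof -
  have "ev_saturated A S \<phi> (Omega A - C)"
    unfolding ev_saturated_def
  proof (intro conjI ballI impI)
    fix x y assume "x \<in> Omega A - C" "y \<in> Omega A" "y S \<phi> = x S \<phi>"
    then show "y \<in> Omega A - C" using C unfolding ev_saturated_def by force
  qed auto
  then have "openin (omega_top A) (Omega A - C)" by (rule openin_ev_saturated[OF a])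
  then show ?thesis using C unfolding ev_saturated_def closedin_def by simp
qed

lemma continuous_map_discrete_ev_factor:
  assumes "adm A S \<phi>" "g \<in> Omega A \<rightarrow> Y"
    and "\<And>x y. x \<in> Omega A \<Longrightarrow> y \<in> Omega A \<Longrightarrow> x S \<phi> = y S \<phi> \<Longrightarrow> g x = g y"
  shows "continuous_map (omega_top A) (discrete_topology Y) g"
  unfolding continuous_map_def
proof (intro conjI allI impI)
  show "g \<in> topspace (omega_top A) \<rightarrow> topspace (discrete_topology Y)" using assms(2) by simp
  fix U
  have "ev_saturated A S \<phi> {x \<in> Omega A. g x \<in> U}"
    unfolding ev_saturated_def
  proof (intro conjI ballI impI)
    fix x y assume "x \<in> {x \<in> Omega A. g x \<in> U}" "y \<in> Omega A" "y S \<phi> = x S \<phi>"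
    then show "y \<in> {x \<in> Omega A. g x \<in> U}" using assms(3)[of y x] by simp
  qed auto
  then show "openin (omega_top A) {x \<in> topspace (omega_top A). g x \<in> U}"
    using openin_ev_saturated[OF assms(1)] by simp
qed

lemma continuous_map_ev:
  assumes "adm A S \<phi>"
  shows "continuous_map (omega_top A) (discrete_topology (fst S)) (\<lambda>w. w S \<phi>)"
  by (rule continuous_map_discrete_ev_factor[OF assms]) (use OmegaD(1)[OF _ assms] in auto)

lemma continuous_map_into_omega_top:
  assumes "f \<in> topspace X \<rightarrow> Omega A"
    and "\<And>S \<phi> c. adm A S \<phi> \<Longrightarrow> openin X {x \<in> topspace X. f x S \<phi> = c}"
  shows "continuous_map X (omega_top A) f"
  unfolding omega_top_def
proof (rule continuous_on_generated_topo)
  fix U assume "U \<in> insert (Omega A) {{w \<in> Omega A. w S \<phi> = c} |S \<phi> c. adm A S \<phi>}"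
  then consider "U = Omega A" | S \<phi> c where "U = {w \<in> Omega A. w S \<phi> = c}" "adm A S \<phi>"
    by blast
  then show "openin X (f -` U \<inter> topspace X)"
  proof cases
    case 1
    then have "f -` U \<inter> topspace X = topspace X" using assms(1) by auto
    then show ?thesis by simp
  next
    case (2 S \<phi> c)
    then have "f -` U \<inter> topspace X = {x \<in> topspace X. f x S \<phi> = c}" using assms(1) by auto
    then show ?thesis using assms(2)[OF 2(2)] by simp
  qed
qed (use assms(1) in auto)

lemma continuous_map_pmul:
  assumes c: "c \<in> Omega A"
  shows "continuous_map (omega_top A) (omega_top A) (pmul A c)"
    and "continuous_map (omega_top A) (omega_top A) (\<lambda>x. pmul A x c)"
proof (rule_tac [!] continuous_map_into_omega_top)
  show "pmul A c \<in> topspace (omega_top A) \<rightarrow> Omega A"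
    "(\<lambda>x. pmul A x c) \<in> topspace (omega_top A) \<rightarrow> Omega A"
    using c pmul_Omega by auto
  fix S \<phi> d assume a: "adm A S \<phi>"
  have "ev_saturated A S \<phi> {x \<in> topspace (omega_top A). pmul A c x S \<phi> = d}"
    "ev_saturated A S \<phi> {x \<in> topspace (omega_top A). pmul A x c S \<phi> = d}"
    unfolding ev_saturated_def using a by (auto simp: pmul_adm)
  then show "openin (omega_top A) {x \<in> topspace (omega_top A). pmul A c x S \<phi> = d}"
    "openin (omega_top A) {x \<in> topspace (omega_top A). pmul A x c S \<phi> = d}"
    using openin_ev_saturated[OF a] by blast+
qed

lemma Hausdorff_omega_top: "Hausdorff_space (omega_top A)"
  unfolding Hausdorff_space_def
proof (intro allI impI)
  fix x y assume "x \<in> topspace (omega_top A) \<and> y \<in> topspace (omega_top A) \<and> x \<noteq> y"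
  then have xy: "x \<in> Omega A" "y \<in> Omega A" "x \<noteq> y" by auto
  then obtain S \<phi> where a: "adm A S \<phi>" "x S \<phi> \<noteq> y S \<phi>"
    using Omega_eqI[OF xy(1,2)] by blast
  let ?U = "{w \<in> Omega A. w S \<phi> = x S \<phi>}" and ?V = "{w \<in> Omega A. w S \<phi> = y S \<phi>}"
  have "openin (omega_top A) ?U" "openin (omega_top A) ?V" "x \<in> ?U" "y \<in> ?V" "disjnt ?U ?V"
    using openin_omega_top_ev[OF a(1)] xy a(2) by (auto simp: disjnt_def)
  then show "\<exists>U V. openin (omega_top A) U \<and> openin (omega_top A) V \<and> x \<in> U \<and> y \<in> V \<and> disjnt U V"
    by blast
qed

text \<open>Both sides are locally constant and agree on the dense set of words.\<close>

lemma continuous_hom_eq_ev: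
  assumes T: "fin_sg T" and hT: "h \<in> Omega A \<rightarrow> fst T"
    and hc: "continuous_map (omega_top A) (discrete_topology (fst T)) h"
    and hm: "\<forall>x\<in>Omega A. \<forall>y\<in>Omega A. h (pmul A x y) = snd T (h x) (h y)"
    and w: "w \<in> Omega A"
  shows "h w = w T (restrict (h \<circ> gen A) A)"
proof -
  define \<psi> where "\<psi> = restrict (h \<circ> gen A) A"
  have "h (gen A a) \<in> fst T" if "a \<in> A" for a using hT gen_Omega[OF that] by blast
  then have aT: "adm A T \<psi>" using T unfolding adm_def \<psi>_def by (auto simp: PiE_def Pi_def)
  have on_words: "h t = t T \<psi>" if "t \<in> words A" for t
    using that
  proof (induction rule: words.induct)
    case (words_gen a)
    then have "\<psi> a = h (gen A a)" by (simp add: \<psi>_def)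
    then show ?case using gen_adm[OF aT] by simp
  next
    case (words_mul x y)
    then have "h (pmul A x y) = snd T (h x) (h y)" using hm words_Omega by blast
    then show ?case using words_mul aT by (simp add: pmul_adm)
  qed
  have "{h w} \<subseteq> fst T" using hT w by auto
  then have "openin (omega_top A) {x \<in> topspace (omega_top A). h x \<in> {h w}}"
    using hc unfolding continuous_map_def openin_discrete_topology by blast
  then have "openin (omega_top A) {x \<in> Omega A. h x = h w}" by simp
  moreover have "w \<in> {x \<in> Omega A. h x = h w}" using w by simp
  ultimately obtain S \<phi> where S: "adm A S \<phi>"
    "{x \<in> Omega A. x S \<phi> = w S \<phi>} \<subseteq> {x \<in> Omega A. h x = h w}"
    by (rule omega_top_ev_nbhd)
  obtain S' \<phi>' where S': "adm A S' \<phi>'" "ev_refines A S' \<phi>' S \<phi>" "ev_refines A S' \<phi>' T \<psi>"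
    by (rule ev_refines_common[OF S(1) aT])
  obtain t where t: "t \<in> words A" "t S' \<phi>' = w S' \<phi>'" by (rule words_dense[OF w S'(1)])
  have tO: "t \<in> Omega A" by (rule words_Omega[OF t(1)])
  have "t S \<phi> = w S \<phi>" using S'(2) tO w t(2) unfolding ev_refines_def by blast
  then have "h t = h w" using S(2) tO by auto
  moreover have "t T \<psi> = w T \<psi>" using S'(3) tO w t(2) unfolding ev_refines_def by blast
  ultimately have "h w = w T \<psi>" using on_words[OF t(1)] by simp
  then show ?thesis by (simp add: \<psi>_def)
qed

text \<open>Compactness: \<open>Omega A\<close> is the continuous image of the closed set of natural families
  inside the compact product of all finite discrete semigroups \<open>S\<close>, indexed by the
  assignments \<open>(S, \<phi>)\<close>.\<close>

definition adm_pairs :: "'a set \<Rightarrow> (fsg \<times> ('a \<Rightarrow> nat)) set" where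
  "adm_pairs A = {i. adm A (fst i) (snd i)}"

definition ev_product :: "'a set \<Rightarrow> (fsg \<times> ('a \<Rightarrow> nat) \<Rightarrow> nat) topology" where
  "ev_product A = product_topology (\<lambda>i. discrete_topology (fst (fst i))) (adm_pairs A)"

definition natural_families :: "'a set \<Rightarrow> (fsg \<times> ('a \<Rightarrow> nat) \<Rightarrow> nat) set" where
  "natural_families A = {p \<in> topspace (ev_product A). \<forall>S \<phi> T h. adm A S \<phi> \<and> fin_sg T \<and> sg_hom S T h
       \<longrightarrow> h (p (S, \<phi>)) = p (T, restrict (h \<circ> \<phi>) A)}"

definition family_pw :: "'a set \<Rightarrow> (fsg \<times> ('a \<Rightarrow> nat) \<Rightarrow> nat) \<Rightarrow> 'a pw" where
  "family_pw A p = (\<lambda>S \<phi>. if adm A S \<phi> then p (S, \<phi>) else 0)"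

lemma topspace_ev_product: "topspace (ev_product A) = (\<Pi>\<^sub>E i\<in>adm_pairs A. fst (fst i))"
  unfolding ev_product_def topspace_product_topology by simp

lemma natural_families_subset: "natural_families A \<subseteq> topspace (ev_product A)"
  unfolding natural_families_def by blast

lemma natural_familiesD:
  "p \<in> natural_families A \<Longrightarrow> adm A S \<phi> \<Longrightarrow> fin_sg T \<Longrightarrow> sg_hom S T h
    \<Longrightarrow> h (p (S, \<phi>)) = p (T, restrict (h \<circ> \<phi>) A)"
  unfolding natural_families_def by blast

lemma natural_families_mem:
  assumes "p \<in> natural_families A" "adm A S \<phi>"
  shows "p (S, \<phi>) \<in> fst S"
proof -
  have "p \<in> (\<Pi>\<^sub>E i\<in>adm_pairs A. fst (fst i))"
    using assms(1) natural_families_subset unfolding topspace_ev_product by blast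
  moreover have "(S, \<phi>) \<in> adm_pairs A" using assms(2) by (simp add: adm_pairs_def)
  ultimately have "p (S, \<phi>) \<in> fst (fst (S, \<phi>))" by (rule PiE_mem)
  then show ?thesis by simp
qed

lemma continuous_map_ev_product_proj:
  assumes "adm A S \<phi>"
  shows "continuous_map (ev_product A) (discrete_topology (fst S)) (\<lambda>p. p (S, \<phi>))"
proof -
  have "(S, \<phi>) \<in> adm_pairs A" using assms by (simp add: adm_pairs_def)
  from continuous_map_product_projection[OF this, of "\<lambda>i. discrete_topology (fst (fst i))"]
  show ?thesis unfolding ev_product_def by simp
qed

definition hom_data :: "'a set \<Rightarrow> (fsg \<times> ('a \<Rightarrow> nat) \<times> fsg \<times> (nat \<Rightarrow> nat)) set" where
  "hom_data A = {(S, \<phi>, T, h). adm A S \<phi> \<and> fin_sg T \<and> sg_hom S T h}"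

definition commuting_families ::
    "'a set \<Rightarrow> fsg \<times> ('a \<Rightarrow> nat) \<times> fsg \<times> (nat \<Rightarrow> nat) \<Rightarrow> (fsg \<times> ('a \<Rightarrow> nat) \<Rightarrow> nat) set" where
  "commuting_families A q = (case q of (S, \<phi>, T, h) \<Rightarrow>
     {p \<in> topspace (ev_product A). h (p (S, \<phi>)) = p (T, restrict (h \<circ> \<phi>) A)})"

lemma closedin_commuting_families:
  assumes "q \<in> hom_data A" shows "closedin (ev_product A) (commuting_families A q)"
proof -
  obtain S \<phi> T h where q: "q = (S, \<phi>, T, h)" by (metis prod.collapse)
  have a: "adm A S \<phi>" "fin_sg T" "sg_hom S T h" using assms unfolding q hom_data_def by simp_all
  have "h \<in> fst S \<rightarrow> fst T" using a(3) unfolding sg_hom_def by blast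
  then have "continuous_map (discrete_topology (fst S)) (discrete_topology (fst T)) h" by simp
  then have "continuous_map (ev_product A) (discrete_topology (fst T)) (h \<circ> (\<lambda>p. p (S, \<phi>)))"
    by (rule continuous_map_compose[OF continuous_map_ev_product_proj[OF a(1)]])
  moreover have "continuous_map (ev_product A) (discrete_topology (fst T)) (\<lambda>p. p (T, restrict (h \<circ> \<phi>) A))"
    by (rule continuous_map_ev_product_proj[OF adm_hom_comp[OF a]])
  ultimately have "closedin (ev_product A)
      {p \<in> topspace (ev_product A). (h \<circ> (\<lambda>p. p (S, \<phi>))) p = p (T, restrict (h \<circ> \<phi>) A)}"
    by (rule closedin_continuous_maps_eq[OF Hausdorff_space_discrete_topology])
  then show ?thesis unfolding commuting_families_def q by simp
qed

lemma natural_families_eq: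
  "natural_families A = topspace (ev_product A) \<inter> \<Inter> (commuting_families A ` hom_data A)"
proof (rule set_eqI)
  fix p
  show "p \<in> natural_families A \<longleftrightarrow> p \<in> topspace (ev_product A) \<inter> \<Inter> (commuting_families A ` hom_data A)"
  proof
    assume p: "p \<in> natural_families A"
    have "p \<in> commuting_families A q" if "q \<in> hom_data A" for q
    proof -
      obtain S \<phi> T h where q: "q = (S, \<phi>, T, h)" by (metis prod.collapse)
      have a: "adm A S \<phi>" "fin_sg T" "sg_hom S T h" using that unfolding q hom_data_def by simp_all
      show ?thesis
        unfolding commuting_families_def q using p natural_families_subset natural_familiesD[OF p a] by auto
    qed
    then show "p \<in> topspace (ev_product A) \<inter> \<Inter> (commuting_families A ` hom_data A)"
      using p natural_families_subset by blast
  next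
    assume p: "p \<in> topspace (ev_product A) \<inter> \<Inter> (commuting_families A ` hom_data A)"
    have "h (p (S, \<phi>)) = p (T, restrict (h \<circ> \<phi>) A)" if "adm A S \<phi>" "fin_sg T" "sg_hom S T h" for S \<phi> T h
    proof -
      have "(S, \<phi>, T, h) \<in> hom_data A" using that unfolding hom_data_def by simp
      then have "p \<in> commuting_families A (S, \<phi>, T, h)" using p by blast
      then show ?thesis unfolding commuting_families_def by simp
    qed
    then show "p \<in> natural_families A" using p unfolding natural_families_def by blast
  qed
qed

lemma closedin_natural_families: "closedin (ev_product A) (natural_families A)"
proof -
  have "closedin (ev_product A) (\<Inter> (insert (topspace (ev_product A)) (commuting_families A ` hom_data A)))"
    by (rule closedin_Inter) (auto intro: closedin_commuting_families)
  moreover have "\<Inter> (insert (topspace (ev_product A)) (commuting_families A ` hom_data A)) = natural_families A"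
    unfolding natural_families_eq by simp
  ultimately show ?thesis by simp
qed

lemma family_pw_Omega:
  assumes p: "p \<in> natural_families A" shows "family_pw A p \<in> Omega A"
  unfolding Omega_def
proof (intro CollectI conjI allI impI)
  fix S \<phi> assume "adm A S \<phi>"
  then show "family_pw A p S \<phi> \<in> fst S" using natural_families_mem[OF p] by (simp add: family_pw_def)
next
  fix S \<phi> assume "\<not> adm A S \<phi>" then show "family_pw A p S \<phi> = 0" by (simp add: family_pw_def)
next
  fix S T h \<phi> assume "adm A S \<phi> \<and> fin_sg T \<and> sg_hom S T h"
  then have a: "adm A S \<phi>" "fin_sg T" "sg_hom S T h" by auto
  then show "h (family_pw A p S \<phi>) = family_pw A p T (restrict (h \<circ> \<phi>) A)"
    using natural_familiesD[OF p a] adm_hom_comp[OF a] by (simp add: family_pw_def)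
qed

lemma Omega_subset_family_pw_image: "Omega A \<subseteq> family_pw A ` natural_families A"
proof
  fix w assume w: "w \<in> Omega A"
  define p where "p = restrict (\<lambda>i. w (fst i) (snd i)) (adm_pairs A)"
  have "p \<in> topspace (ev_product A)"
    unfolding topspace_ev_product p_def adm_pairs_def using OmegaD(1)[OF w] by auto
  moreover have "h (p (S, \<phi>)) = p (T, restrict (h \<circ> \<phi>) A)"
    if "adm A S \<phi>" "fin_sg T" "sg_hom S T h" for S \<phi> T h
    using that adm_hom_comp[OF that] OmegaD(3)[OF w] unfolding p_def adm_pairs_def by simp
  ultimately have "p \<in> natural_families A" unfolding natural_families_def by blast
  moreover have "family_pw A p = w"
  proof (intro ext)
    fix S \<phi> show "family_pw A p S \<phi> = w S \<phi>"
      using OmegaD(2)[OF w] unfolding family_pw_def p_def adm_pairs_def by simp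
  qed
  ultimately show "w \<in> family_pw A ` natural_families A" by blast
qed

lemma continuous_map_family_pw:
  "continuous_map (subtopology (ev_product A) (natural_families A)) (omega_top A) (family_pw A)"
proof (rule continuous_map_into_omega_top)
  have ts: "topspace (subtopology (ev_product A) (natural_families A)) = natural_families A"
    using natural_families_subset by auto
  show "family_pw A \<in> topspace (subtopology (ev_product A) (natural_families A)) \<rightarrow> Omega A"
    unfolding ts using family_pw_Omega by blast
  fix S \<phi> c assume a: "adm A S \<phi>"
  have "openin (discrete_topology (fst S)) ({c} \<inter> fst S)" by simp
  then have "openin (ev_product A) {p \<in> topspace (ev_product A). p (S, \<phi>) \<in> {c} \<inter> fst S}"
    using continuous_map_ev_product_proj[OF a] unfolding continuous_map_def by blast
  then have "openin (subtopology (ev_product A) (natural_families A))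
      (natural_families A \<inter> {p \<in> topspace (ev_product A). p (S, \<phi>) \<in> {c} \<inter> fst S})"
    by (rule openin_subtopology_Int2)
  moreover have "natural_families A \<inter> {p \<in> topspace (ev_product A). p (S, \<phi>) \<in> {c} \<inter> fst S}
      = {p \<in> topspace (subtopology (ev_product A) (natural_families A)). family_pw A p S \<phi> = c}"
    unfolding ts using natural_families_mem[OF _ a] natural_families_subset a
    by (auto simp: family_pw_def)
  ultimately show "openin (subtopology (ev_product A) (natural_families A))
      {p \<in> topspace (subtopology (ev_product A) (natural_families A)). family_pw A p S \<phi> = c}"
    by simp
qed

lemma compact_space_omega_top: "compact_space (omega_top A)"
proof -
  have "compact_space (ev_product A)"
    unfolding ev_product_def compact_space_product_topology
  proof (intro disjI2 ballI)
    fix i assume "i \<in> adm_pairs A"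
    then have "finite (fst (fst i))" unfolding adm_pairs_def using admD(1) fin_sgD(1) by blast
    then show "compact_space (discrete_topology (fst (fst i)))"
      unfolding compact_space_discrete_topology .
  qed
  then have "compact_space (subtopology (ev_product A) (natural_families A))"
    using closedin_natural_families closedin_compact_space compact_space_subtopology by blast
  moreover have "topspace (subtopology (ev_product A) (natural_families A)) = natural_families A"
    using natural_families_subset by auto
  ultimately have "compactin (omega_top A) (family_pw A ` natural_families A)"
    using image_compactin[OF _ continuous_map_family_pw] unfolding compact_space_def by metis
  moreover have "family_pw A ` natural_families A = Omega A"
    using family_pw_Omega Omega_subset_family_pw_image by blast
  ultimately show ?thesis unfolding compact_space_def by simp
qed

section \<open>Powers and \<open>\<omega>\<close>-powers\<close>

text \<open>\<open>sg_pow S s n\<close> is the power \<open>s\<^sup>n\<^sup>+\<^sup>1\<close>, matching \<open>ppow\<close>.\<close>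

fun sg_pow :: "fsg \<Rightarrow> nat \<Rightarrow> nat \<Rightarrow> nat" where
  "sg_pow S s 0 = s"
| "sg_pow S s (Suc n) = snd S (sg_pow S s n) s"

lemma sg_pow_in: "fin_sg S \<Longrightarrow> s \<in> fst S \<Longrightarrow> sg_pow S s n \<in> fst S"
  by (induction n) (auto intro: fin_sgD(2))

lemma sg_pow_add:
  assumes "fin_sg S" "s \<in> fst S"
  shows "snd S (sg_pow S s m) (sg_pow S s n) = sg_pow S s (m + n + 1)"
proof (induction n)
  case (Suc n)
  have "snd S (sg_pow S s m) (sg_pow S s (Suc n)) = snd S (snd S (sg_pow S s m) (sg_pow S s n)) s"
    using fin_sgD(3)[OF assms(1) sg_pow_in[OF assms] sg_pow_in[OF assms] assms(2)] by simp
  then show ?case using Suc by simp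
qed simp

lemma sg_pow_mult:
  assumes "fin_sg S" "s \<in> fst S"
  shows "sg_pow S (sg_pow S s m) n = sg_pow S s ((m + 1) * (n + 1) - 1)"
proof (induction n)
  case (Suc n)
  have "sg_pow S (sg_pow S s m) (Suc n) = snd S (sg_pow S s ((m + 1) * (n + 1) - 1)) (sg_pow S s m)"
    using Suc by simp
  also have "\<dots> = sg_pow S s ((m + 1) * (n + 1) - 1 + m + 1)" by (rule sg_pow_add[OF assms])
  also have "(m + 1) * (n + 1) - 1 + m + 1 = (m + 1) * (Suc n + 1) - 1" by (simp add: algebra_simps)
  finally show ?case .
qed simp

lemma sg_pow_hom:
  assumes "fin_sg S" "s \<in> fst S" "sg_hom S T h"
  shows "h (sg_pow S s n) = sg_pow T (h s) n"
  by (induction n) (use assms sg_pow_in[OF assms(1,2)] in \<open>simp_all add: sg_hom_def\<close>)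

lemma sg_pow_shift:
  assumes S: "fin_sg S" and st: "s \<in> fst S" "t \<in> fst S"
  shows "snd S (sg_pow S (snd S s t) n) s = snd S s (sg_pow S (snd S t s) n)"
proof (induction n)
  case 0 then show ?case using fin_sgD(3)[OF S st st(1)] by simp
next
  case (Suc n)
  have a: "snd S s t \<in> fst S" "snd S t s \<in> fst S" using fin_sgD(2)[OF S] st by auto
  define P where "P = sg_pow S (snd S s t) n"
  define Q where "Q = sg_pow S (snd S t s) n"
  have P: "P \<in> fst S" and Q: "Q \<in> fst S" unfolding P_def Q_def using sg_pow_in[OF S a(1)] sg_pow_in[OF S a(2)] .
  note as = fin_sgD(3)[OF S]
  have "snd S (sg_pow S (snd S s t) (Suc n)) s = snd S P (snd S (snd S s t) s)"
    using as[OF P a(1) st(1)] by (simp add: P_def)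
  also have "\<dots> = snd S (snd S P s) (snd S t s)" using as[OF st st(1)] as[OF P st(1) a(2)] by simp
  also have "\<dots> = snd S s (snd S Q (snd S t s))" using Suc as[OF st(1) Q a(2)] by (simp add: P_def Q_def)
  also have "\<dots> = snd S s (sg_pow S (snd S t s) (Suc n))" by (simp add: Q_def)
  finally show ?case .
qed

lemma sg_pow_periodic:
  assumes S: "fin_sg S" "s \<in> fst S" and per: "sg_pow S s (i + p) = sg_pow S s i" and k: "i \<le> k"
  shows "sg_pow S s (k + q * p) = sg_pow S s k"
proof -
  have step: "sg_pow S s (k' + p) = sg_pow S s k'" if "i \<le> k'" for k'
  proof (cases "k' = i")
    case False
    then have "k' = i + (k' - i - 1) + 1" "k' + p = (i + p) + (k' - i - 1) + 1" using that by auto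
    then show ?thesis using sg_pow_add[OF S, of i "k' - i - 1"] sg_pow_add[OF S, of "i + p" "k' - i - 1"] per
      by metis
  qed (use per in simp)
  show ?thesis
  proof (induction q)
    case (Suc q)
    have "sg_pow S s (k + Suc q * p) = sg_pow S s ((k + q * p) + p)" by (simp add: algebra_simps)
    then show ?case using step[of "k + q * p"] k Suc by simp
  qed simp
qed

lemma sg_pow_repeat:
  assumes S: "fin_sg S" "s \<in> fst S"
  obtains i p where "1 \<le> p" "i + p \<le> card (fst S)" "sg_pow S s (i + p) = sg_pow S s i"
proof -
  let ?c = "card (fst S)"
  have fin: "finite (fst S)" using fin_sgD(1)[OF S(1)] .
  have "\<not> inj_on (sg_pow S s) {0..?c}"
  proof
    assume "inj_on (sg_pow S s) {0..?c}"
    then have "card (sg_pow S s ` {0..?c}) = ?c + 1" by (simp add: card_image)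
    moreover have "sg_pow S s ` {0..?c} \<subseteq> fst S" using sg_pow_in[OF S] by auto
    then have "card (sg_pow S s ` {0..?c}) \<le> ?c" by (rule card_mono[OF fin])
    ultimately show False by simp
  qed
  then obtain i j where "i \<le> ?c" "j \<le> ?c" "i < j" "sg_pow S s i = sg_pow S s j"
    unfolding inj_on_def by (metis atLeastAtMost_iff linorder_neqE_nat)
  then show ?thesis using that[of "j - i" i] by simp
qed

text \<open>\<open>|S|!\<close> is a multiple of every period of a power sequence in \<open>S\<close>, so \<open>s\<^bsup>|S|!\<^esup>\<close>
  is idempotent.\<close>

definition sg_exp :: "fsg \<Rightarrow> nat" where "sg_exp S = fact (card (fst S))"

lemma sg_exp_ge_1: "1 \<le> sg_exp S"
  unfolding sg_exp_def by (simp add: fact_ge_1)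

lemma sg_pow_exp_idem:
  assumes S: "fin_sg S" "s \<in> fst S"
  shows "sg_pow S s (2 * sg_exp S - 1) = sg_pow S s (sg_exp S - 1)"
proof -
  obtain i p where p: "1 \<le> p" "i + p \<le> card (fst S)" "sg_pow S s (i + p) = sg_pow S s i"
    by (rule sg_pow_repeat[OF S])
  have "i \<le> sg_exp S - 1" using p fact_ge_self[of "card (fst S)"] unfolding sg_exp_def by linarith
  moreover have dvd: "p dvd sg_exp S" unfolding sg_exp_def using p by (simp add: dvd_fact)
  ultimately have "sg_pow S s (sg_exp S - 1 + (sg_exp S div p) * p) = sg_pow S s (sg_exp S - 1)"
    using sg_pow_periodic[OF S p(3)] by blast
  moreover have "sg_exp S - 1 + (sg_exp S div p) * p = 2 * sg_exp S - 1"
    using dvd sg_exp_ge_1[of S] by simp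
  ultimately show ?thesis by simp
qed

lemma sg_pow_idem_unique:
  assumes T: "fin_sg T" "t \<in> fst T" and a: "1 \<le> a"
    and idem: "sg_pow T t (2 * a - 1) = sg_pow T t (a - 1)"
  shows "sg_pow T t (a - 1) = sg_pow T t (sg_exp T - 1)"
    and "sg_pow T t (2 * a - 2) = sg_pow T t (2 * sg_exp T - 2)"
proof -
  let ?b = "sg_exp T"
  have b: "1 \<le> ?b" by (rule sg_exp_ge_1)
  have pa: "sg_pow T t (a - 1 + a) = sg_pow T t (a - 1)" using idem a by (simp add: mult_2)
  have pb: "sg_pow T t (?b - 1 + ?b) = sg_pow T t (?b - 1)"
    using sg_pow_exp_idem[OF T] b by (simp add: mult_2)
  have "sg_pow T t (a - 1 + (?b - 1) * a) = sg_pow T t (a - 1)"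
    "sg_pow T t (?b - 1 + (a - 1) * ?b) = sg_pow T t (?b - 1)"
    using sg_pow_periodic[OF T pa] sg_pow_periodic[OF T pb] by auto
  moreover have "a - 1 + (?b - 1) * a = ?b - 1 + (a - 1) * ?b" using a b by (simp add: algebra_simps)
  ultimately show "sg_pow T t (a - 1) = sg_pow T t (sg_exp T - 1)" by simp
  have "sg_pow T t (2 * a - 2 + (2 * ?b - 2) * a) = sg_pow T t (2 * a - 2)"
    "sg_pow T t (2 * ?b - 2 + (2 * a - 2) * ?b) = sg_pow T t (2 * ?b - 2)"
    using sg_pow_periodic[OF T pa, of "2 * a - 2"] sg_pow_periodic[OF T pb, of "2 * ?b - 2"] a b by auto
  moreover have "2 * a - 2 + (2 * ?b - 2) * a = 2 * ?b - 2 + (2 * a - 2) * ?b"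
    using a b by (simp add: algebra_simps)
  ultimately show "sg_pow T t (2 * a - 2) = sg_pow T t (2 * sg_exp T - 2)" by simp
qed

text \<open>Pointwise \<open>x\<^sup>\<omega> = x\<^bsup>|S|!\<^esup>\<close> and \<open>x\<^bsup>\<omega>-1\<^esup> = x\<^bsup>2|S|!-1\<^esup>\<close> at every finite semigroup \<open>S\<close>.\<close>

definition omega_pt :: "'a set \<Rightarrow> 'a pw \<Rightarrow> 'a pw" where
  "omega_pt A u = (\<lambda>S \<phi>. if adm A S \<phi> then sg_pow S (u S \<phi>) (sg_exp S - 1) else 0)"

definition omega_pred_pt :: "'a set \<Rightarrow> 'a pw \<Rightarrow> 'a pw" where
  "omega_pred_pt A u = (\<lambda>S \<phi>. if adm A S \<phi> then sg_pow S (u S \<phi>) (2 * sg_exp S - 2) else 0)"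

lemma omega_pt_adm: "adm A S \<phi> \<Longrightarrow> omega_pt A u S \<phi> = sg_pow S (u S \<phi>) (sg_exp S - 1)"
  by (simp add: omega_pt_def)

lemma omega_pred_pt_adm:
  "adm A S \<phi> \<Longrightarrow> omega_pred_pt A u S \<phi> = sg_pow S (u S \<phi>) (2 * sg_exp S - 2)"
  by (simp add: omega_pred_pt_def)

text \<open>A pointwise power \<open>x\<^bsup>k S + 1\<^esup>\<close> is natural as soon as the exponent \<open>k\<close> depends on \<open>S\<close>
  only through the idempotent of \<open>x\<close>.\<close>

lemma sg_pow_pt_Omega:
  assumes u: "u \<in> Omega A"
    and per: "\<And>S T t. fin_sg S \<Longrightarrow> fin_sg T \<Longrightarrow> t \<in> fst T
               \<Longrightarrow> sg_pow T t (2 * sg_exp S - 1) = sg_pow T t (sg_exp S - 1)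
               \<Longrightarrow> sg_pow T t (k S) = sg_pow T t (k T)"
  shows "(\<lambda>S \<phi>. if adm A S \<phi> then sg_pow S (u S \<phi>) (k S) else 0) \<in> Omega A"
  unfolding Omega_def
proof (intro CollectI conjI allI impI)
  fix S \<phi> assume a: "adm A S \<phi>"
  show "(if adm A S \<phi> then sg_pow S (u S \<phi>) (k S) else 0) \<in> fst S"
    using a sg_pow_in[OF admD(1)[OF a] OmegaD(1)[OF u a]] by simp
next
  fix S T h \<phi> assume "adm A S \<phi> \<and> fin_sg T \<and> sg_hom S T h"
  then have a: "adm A S \<phi>" and T: "fin_sg T" and h: "sg_hom S T h" by auto
  have a': "adm A T (restrict (h \<circ> \<phi>) A)" using adm_hom_comp[OF a T h] .
  have S: "fin_sg S" and s: "u S \<phi> \<in> fst S" using admD(1)[OF a] OmegaD(1)[OF u a] .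
  have hu: "h (u S \<phi>) = u T (restrict (h \<circ> \<phi>) A)" using OmegaD(3)[OF u a T h] .
  have "sg_pow T (h (u S \<phi>)) (2 * sg_exp S - 1) = sg_pow T (h (u S \<phi>)) (sg_exp S - 1)"
    using sg_pow_hom[OF S s h] sg_pow_exp_idem[OF S s] by metis
  then have "h (sg_pow S (u S \<phi>) (k S)) = sg_pow T (h (u S \<phi>)) (k T)"
    using sg_pow_hom[OF S s h] per[OF S T] OmegaD(1)[OF u a'] hu by simp
  then show "h (if adm A S \<phi> then sg_pow S (u S \<phi>) (k S) else 0)
      = (if adm A T (restrict (h \<circ> \<phi>) A) then sg_pow T (u T (restrict (h \<circ> \<phi>) A)) (k T) else 0)"
    using a a' hu by simp
qed simp

lemma omega_pt_Omega: "u \<in> Omega A \<Longrightarrow> omega_pt A u \<in> Omega A"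
  unfolding omega_pt_def
  by (rule sg_pow_pt_Omega) (use sg_pow_idem_unique(1) sg_exp_ge_1 in auto)

lemma omega_pred_pt_Omega: "u \<in> Omega A \<Longrightarrow> omega_pred_pt A u \<in> Omega A"
  unfolding omega_pred_pt_def
  by (rule sg_pow_pt_Omega) (use sg_pow_idem_unique(2) sg_exp_ge_1 in auto)

lemma pmul_omega_pred_pt:
  assumes u: "u \<in> Omega A"
  shows "pmul A u (omega_pred_pt A u) = omega_pt A u"
    and "pmul A (omega_pred_pt A u) u = omega_pt A u"
proof -
  have "pmul A u (omega_pred_pt A u) S \<phi> = omega_pt A u S \<phi>"
    "pmul A (omega_pred_pt A u) u S \<phi> = omega_pt A u S \<phi>" if a: "adm A S \<phi>" for S \<phi>
  proof -
    have S: "fin_sg S" "u S \<phi> \<in> fst S" using admD(1)[OF a] OmegaD(1)[OF u a] .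
    have e: "0 + (2 * sg_exp S - 2) + 1 = 2 * sg_exp S - 1" "(2 * sg_exp S - 2) + 0 + 1 = 2 * sg_exp S - 1"
      using sg_exp_ge_1[of S] by simp_all
    show "pmul A u (omega_pred_pt A u) S \<phi> = omega_pt A u S \<phi>"
      "pmul A (omega_pred_pt A u) u S \<phi> = omega_pt A u S \<phi>"
      using sg_pow_add[OF S, of 0 "2 * sg_exp S - 2"] sg_pow_add[OF S, of "2 * sg_exp S - 2" 0]
        sg_pow_exp_idem[OF S]
      unfolding e by (simp_all add: pmul_adm a omega_pt_adm omega_pred_pt_adm)
  qed
  then show "pmul A u (omega_pred_pt A u) = omega_pt A u" "pmul A (omega_pred_pt A u) u = omega_pt A u"
    using u by (auto intro!: Omega_eqI pmul_Omega omega_pt_Omega omega_pred_pt_Omega)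
qed

lemma omega_pt_square:
  assumes u: "u \<in> Omega A" shows "omega_pt A (pmul A u u) = omega_pt A u"
proof (rule Omega_eqI)
  show "omega_pt A (pmul A u u) \<in> Omega A" "omega_pt A u \<in> Omega A"
    by (simp_all add: u pmul_Omega omega_pt_Omega)
  fix S \<phi> assume a: "adm A S \<phi>"
  have S: "fin_sg S" "u S \<phi> \<in> fst S" using admD(1)[OF a] OmegaD(1)[OF u a] .
  have e: "(1 + 1) * (sg_exp S - 1 + 1) - 1 = 2 * sg_exp S - 1" using sg_exp_ge_1[of S] by simp
  have "snd S (u S \<phi>) (u S \<phi>) = sg_pow S (u S \<phi>) 1" by simp
  then show "omega_pt A (pmul A u u) S \<phi> = omega_pt A u S \<phi>"
    using sg_pow_mult[OF S, of 1 "sg_exp S - 1"] sg_pow_exp_idem[OF S] unfolding e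
    by (simp add: pmul_adm a omega_pt_adm)
qed

lemma omega_pt_pmul_shift:
  assumes "x \<in> Omega A" "y \<in> Omega A"
  shows "pmul A (omega_pt A (pmul A x y)) x = pmul A x (omega_pt A (pmul A y x))"
proof (rule Omega_eqI)
  show "pmul A (omega_pt A (pmul A x y)) x \<in> Omega A" "pmul A x (omega_pt A (pmul A y x)) \<in> Omega A"
    by (simp_all add: assms pmul_Omega omega_pt_Omega)
  fix S \<phi> assume a: "adm A S \<phi>"
  show "pmul A (omega_pt A (pmul A x y)) x S \<phi> = pmul A x (omega_pt A (pmul A y x)) S \<phi>"
    using sg_pow_shift[OF admD(1)[OF a] OmegaD(1)[OF assms(1) a] OmegaD(1)[OF assms(2) a]]
    by (simp add: pmul_adm a omega_pt_adm)
qed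

lemma ppow_adm: "adm A S \<phi> \<Longrightarrow> ppow A u k S \<phi> = sg_pow S (u S \<phi>) k"
  by (induction k) (simp_all add: pmul_adm)

lemma ppow_Omega: "u \<in> Omega A \<Longrightarrow> ppow A u k \<in> Omega A"
  by (induction k) (simp_all add: pmul_Omega)

lemma limitin_ppow_fact:
  assumes u: "u \<in> Omega A"
  shows "limitin (omega_top A) (\<lambda>n. ppow A u (fact n - 1)) (omega_pt A u) sequentially"
  unfolding limitin_def
proof (intro conjI allI impI)
  show "omega_pt A u \<in> topspace (omega_top A)" using omega_pt_Omega[OF u] by simp
  fix U assume "openin (omega_top A) U \<and> omega_pt A u \<in> U"
  then obtain S \<phi> where S: "adm A S \<phi>" "{x \<in> Omega A. x S \<phi> = omega_pt A u S \<phi>} \<subseteq> U"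
    using omega_top_ev_nbhd by blast
  have fS: "fin_sg S" and s: "u S \<phi> \<in> fst S" using admD(1)[OF S(1)] OmegaD(1)[OF u S(1)] .
  have idem: "sg_pow S (u S \<phi>) (sg_exp S - 1 + sg_exp S) = sg_pow S (u S \<phi>) (sg_exp S - 1)"
    using sg_pow_exp_idem[OF fS s] sg_exp_ge_1[of S] by (simp add: mult_2)
  show "\<forall>\<^sub>F n in sequentially. ppow A u (fact n - 1) \<in> U"
  proof (rule eventually_sequentiallyI)
    fix n assume "card (fst S) \<le> n"
    then obtain q where q: "fact n = sg_exp S * q" unfolding sg_exp_def by (metis fact_dvd dvdE)
    then have "1 \<le> q" using fact_ge_1[of n] by (cases q) auto
    then have "fact n - 1 = sg_exp S - 1 + (q - 1) * sg_exp S" using q sg_exp_ge_1[of S]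
      by (cases q) (auto simp: algebra_simps)
    then have "ppow A u (fact n - 1) S \<phi> = omega_pt A u S \<phi>"
      using sg_pow_periodic[OF fS s idem] S(1) by (simp add: ppow_adm omega_pt_adm)
    then show "ppow A u (fact n - 1) \<in> U" using S(2) ppow_Omega[OF u] by blast
  qed
qed

lemma omega_eq_omega_pt:
  assumes u: "u \<in> Omega A" shows "omega A u = omega_pt A u"
  unfolding omega_def
proof (rule the_equality)
  show "limitin (omega_top A) (\<lambda>n. ppow A u (fact n - 1)) (omega_pt A u) sequentially"
    by (rule limitin_ppow_fact[OF u])
  fix w assume "limitin (omega_top A) (\<lambda>n. ppow A u (fact n - 1)) w sequentially"
  then show "w = omega_pt A u"
    using limitin_Hausdorff_unique[OF _ limitin_ppow_fact[OF u] trivial_limit_sequentially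
        Hausdorff_omega_top] by blast
qed

section \<open>Substitution\<close>

definition subst_pw :: "'a set \<Rightarrow> 'b set \<Rightarrow> ('b \<Rightarrow> 'a pw) \<Rightarrow> 'b pw \<Rightarrow> 'a pw" where
  "subst_pw A B g w = (\<lambda>S \<phi>. if adm A S \<phi> then w S (restrict (\<lambda>b. g b S \<phi>) B) else 0)"

lemma adm_subst:
  assumes g: "\<forall>b\<in>B. g b \<in> Omega A" and a: "adm A S \<phi>"
  shows "adm B S (restrict (\<lambda>b. g b S \<phi>) B)"
  using admD[OF a] OmegaD(1)[OF _ a] g unfolding adm_def by auto

lemma subst_pw_adm: "adm A S \<phi> \<Longrightarrow> subst_pw A B g w S \<phi> = w S (restrict (\<lambda>b. g b S \<phi>) B)"
  by (simp add: subst_pw_def)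

lemma subst_pw_Omega:
  assumes g: "\<forall>b\<in>B. g b \<in> Omega A" and w: "w \<in> Omega B"
  shows "subst_pw A B g w \<in> Omega A"
  unfolding Omega_def
proof (intro CollectI conjI allI impI)
  fix S \<phi> assume a: "adm A S \<phi>"
  show "subst_pw A B g w S \<phi> \<in> fst S"
    using OmegaD(1)[OF w adm_subst[OF g a]] a by (simp add: subst_pw_adm)
next
  fix S \<phi> assume "\<not> adm A S \<phi>" then show "subst_pw A B g w S \<phi> = 0" by (simp add: subst_pw_def)
next
  fix S T h \<phi> assume "adm A S \<phi> \<and> fin_sg T \<and> sg_hom S T h"
  then have a: "adm A S \<phi>" and T: "fin_sg T" and h: "sg_hom S T h" by auto
  have "restrict (h \<circ> restrict (\<lambda>b. g b S \<phi>) B) B = restrict (\<lambda>b. g b T (restrict (h \<circ> \<phi>) A)) B"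
    using OmegaD(3)[OF _ a T h] g by (intro restrict_ext) simp
  then show "h (subst_pw A B g w S \<phi>) = subst_pw A B g w T (restrict (h \<circ> \<phi>) A)"
    using OmegaD(3)[OF w adm_subst[OF g a] T h] a adm_hom_comp[OF a T h] by (simp add: subst_pw_adm)
qed

lemma subst_pw_pmul:
  assumes g: "\<forall>b\<in>B. g b \<in> Omega A" and u: "u \<in> Omega B" and v: "v \<in> Omega B"
  shows "subst_pw A B g (pmul B u v) = pmul A (subst_pw A B g u) (subst_pw A B g v)"
proof (rule Omega_eqI)
  show "subst_pw A B g (pmul B u v) \<in> Omega A" "pmul A (subst_pw A B g u) (subst_pw A B g v) \<in> Omega A"
    by (intro pmul_Omega subst_pw_Omega[OF g] u v)+
  fix S \<phi> assume a: "adm A S \<phi>"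
  show "subst_pw A B g (pmul B u v) S \<phi> = pmul A (subst_pw A B g u) (subst_pw A B g v) S \<phi>"
    using adm_subst[OF g a] a by (simp add: subst_pw_adm pmul_adm)
qed

lemma subst_pw_gen:
  assumes g: "\<forall>b\<in>B. g b \<in> Omega A" and b: "b \<in> B"
  shows "subst_pw A B g (gen B b) = g b"
proof (rule Omega_eqI)
  show "subst_pw A B g (gen B b) \<in> Omega A" "g b \<in> Omega A"
    using subst_pw_Omega[OF g gen_Omega[OF b]] g b by auto
  fix S \<phi> assume a: "adm A S \<phi>"
  show "subst_pw A B g (gen B b) S \<phi> = g b S \<phi>"
    using adm_subst[OF g a] a b by (simp add: subst_pw_adm gen_adm)
qed

lemma subst_pw_omega_pt:
  assumes g: "\<forall>b\<in>B. g b \<in> Omega A" and w: "w \<in> Omega B"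
  shows "subst_pw A B g (omega_pt B w) = omega_pt A (subst_pw A B g w)"
proof (rule Omega_eqI)
  show "subst_pw A B g (omega_pt B w) \<in> Omega A" "omega_pt A (subst_pw A B g w) \<in> Omega A"
    using subst_pw_Omega[OF g] omega_pt_Omega w by auto
  fix S \<phi> assume a: "adm A S \<phi>"
  show "subst_pw A B g (omega_pt B w) S \<phi> = omega_pt A (subst_pw A B g w) S \<phi>"
    using adm_subst[OF g a] a by (simp add: subst_pw_adm omega_pt_adm)
qed

lemma cont_hom_subst_pw:
  assumes g: "\<forall>b\<in>B. g b \<in> Omega A"
  shows "cont_hom B A (subst_pw A B g)"
proof -
  have "continuous_map (omega_top B) (omega_top A) (subst_pw A B g)"
  proof (rule continuous_map_into_omega_top)
    show "subst_pw A B g \<in> topspace (omega_top B) \<rightarrow> Omega A" using subst_pw_Omega[OF g] by auto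
    fix S \<phi> c assume a: "adm A S \<phi>"
    have "{x \<in> topspace (omega_top B). subst_pw A B g x S \<phi> = c}
        = {x \<in> Omega B. x S (restrict (\<lambda>b. g b S \<phi>) B) = c}"
      using a by (simp add: subst_pw_adm)
    then show "openin (omega_top B) {x \<in> topspace (omega_top B). subst_pw A B g x S \<phi> = c}"
      using openin_omega_top_ev[OF adm_subst[OF g a]] by simp
  qed
  then show ?thesis
    unfolding cont_hom_def using subst_pw_Omega[OF g] subst_pw_pmul[OF g] by auto
qed

section \<open>Provability\<close>

abbreviation omega_top2 :: "'a set \<Rightarrow> ('a pw \<times> 'a pw) topology" where
  "omega_top2 A \<equiv> prod_topology (omega_top A) (omega_top A)"

definition wf_pseudoidentities :: "('b set \<times> 'b pw \<times> 'b pw) set \<Rightarrow> bool" where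
  "wf_pseudoidentities \<Sigma> \<longleftrightarrow> (\<forall>B l r. (B, l, r) \<in> \<Sigma> \<longrightarrow> l \<in> Omega B \<and> r \<in> Omega B)"

lemma Sigma0_subset_provable_rel: "Sigma0 \<Sigma> A \<subseteq> provable_rel \<Sigma> A"
  unfolding provable_rel_def by blast

lemma provable_rel_trans:
  "(x, y) \<in> provable_rel \<Sigma> A \<Longrightarrow> (y, z) \<in> provable_rel \<Sigma> A \<Longrightarrow> (x, z) \<in> provable_rel \<Sigma> A"
  unfolding provable_rel_def trans_def by blast

lemma closure_of_provable_rel:
  "omega_top2 A closure_of provable_rel \<Sigma> A \<subseteq> provable_rel \<Sigma> A"
proof (rule subsetI)
  fix z assume z: "z \<in> omega_top2 A closure_of provable_rel \<Sigma> A"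
  have "z \<in> R" if R: "Sigma0 \<Sigma> A \<subseteq> R" "trans R" "omega_top2 A closure_of R \<subseteq> R" for R
  proof -
    have "provable_rel \<Sigma> A \<subseteq> R" using R unfolding provable_rel_def by blast
    then show ?thesis using closure_of_mono R(3) z by blast
  qed
  then show "z \<in> provable_rel \<Sigma> A" unfolding provable_rel_def by blast
qed

lemma provable_rel_least:
  assumes "Sigma0 \<Sigma> A \<subseteq> R" "trans R" "closedin (omega_top2 A) R"
  shows "provable_rel \<Sigma> A \<subseteq> R"
  using assms closure_of_closedin unfolding provable_rel_def by blast

lemma Sigma0E:
  assumes "z \<in> Sigma0 \<Sigma> A"
  obtains B u v f \<rho> t where "z = (teval A (\<rho>(0 := f u)) t, teval A (\<rho>(0 := f v)) t)"
    "(B, u, v) \<in> \<Sigma> \<or> (B, v, u) \<in> \<Sigma>" "cont_hom B A f" "\<forall>i. \<rho> i \<in> Omega A"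
proof -
  from assms have "\<exists>B u v f \<rho> t. z = (teval A (\<rho>(0 := f u)) t, teval A (\<rho>(0 := f v)) t) \<and>
      ((B, u, v) \<in> \<Sigma> \<or> (B, v, u) \<in> \<Sigma>) \<and> cont_hom B A f \<and> (\<forall>i. \<rho> i \<in> Omega A)"
    unfolding Sigma0_def by (simp only: mem_Collect_eq)
  then show ?thesis using that by (elim exE conjE) (rule that; assumption)
qed

lemma Sigma0I:
  assumes "(B, u, v) \<in> \<Sigma> \<or> (B, v, u) \<in> \<Sigma>" "cont_hom B A f" "\<forall>i. \<rho> i \<in> Omega A"
  shows "(teval A (\<rho>(0 := f u)) t, teval A (\<rho>(0 := f v)) t) \<in> Sigma0 \<Sigma> A"
  unfolding Sigma0_def mem_Collect_eq
  by (rule exI[of _ B], rule exI[of _ u], rule exI[of _ v], rule exI[of _ f], rule exI[of _ \<rho>],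
      rule exI[of _ t]) (use assms in simp)

lemma Sigma0_swap:
  assumes "(a, b) \<in> Sigma0 \<Sigma> A" shows "(b, a) \<in> Sigma0 \<Sigma> A"
proof -
  obtain B u v f \<rho> t where z: "(a, b) = (teval A (\<rho>(0 := f u)) t, teval A (\<rho>(0 := f v)) t)"
    "(B, u, v) \<in> \<Sigma> \<or> (B, v, u) \<in> \<Sigma>" "cont_hom B A f" "\<forall>i. \<rho> i \<in> Omega A"
    by (rule Sigma0E[OF assms])
  have "(B, v, u) \<in> \<Sigma> \<or> (B, u, v) \<in> \<Sigma>" using z(2) by blast
  from Sigma0I[OF this z(3) z(4), of t] show ?thesis using z(1) by simp
qed

lemma teval_Omega: "\<forall>i. \<rho> i \<in> Omega A \<Longrightarrow> teval A \<rho> t \<in> Omega A"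
  by (induction t) (auto intro: pmul_Omega)

lemma Sigma0_subset_Omega:
  assumes "wf_pseudoidentities \<Sigma>" shows "Sigma0 \<Sigma> A \<subseteq> Omega A \<times> Omega A"
proof
  fix z assume "z \<in> Sigma0 \<Sigma> A"
  then obtain B u v f \<rho> t where z: "z = (teval A (\<rho>(0 := f u)) t, teval A (\<rho>(0 := f v)) t)"
    "(B, u, v) \<in> \<Sigma> \<or> (B, v, u) \<in> \<Sigma>" "cont_hom B A f" "\<forall>i. \<rho> i \<in> Omega A"
    by (rule Sigma0E)
  have "u \<in> Omega B" "v \<in> Omega B" using z(2) assms unfolding wf_pseudoidentities_def by blast+
  then have "f u \<in> Omega A" "f v \<in> Omega A" using z(3) unfolding cont_hom_def by auto
  then have "\<forall>i. (\<rho>(0 := f u)) i \<in> Omega A" "\<forall>i. (\<rho>(0 := f v)) i \<in> Omega A" using z(4) by auto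
  then have "teval A (\<rho>(0 := f u)) t \<in> Omega A" "teval A (\<rho>(0 := f v)) t \<in> Omega A"
    by (simp_all add: teval_Omega)
  then show "z \<in> Omega A \<times> Omega A" by (simp add: z(1))
qed

lemma provable_rel_subset_Omega:
  assumes "wf_pseudoidentities \<Sigma>" shows "provable_rel \<Sigma> A \<subseteq> Omega A \<times> Omega A"
proof (rule provable_rel_least)
  show "closedin (omega_top2 A) (Omega A \<times> Omega A)"
    using closedin_topspace[of "omega_top2 A"] by simp
qed (use Sigma0_subset_Omega[OF assms] in \<open>auto simp: trans_def\<close>)

lemma closedin_provable_rel:
  assumes "wf_pseudoidentities \<Sigma>" shows "closedin (omega_top2 A) (provable_rel \<Sigma> A)"
  using closure_of_subset_eq provable_rel_subset_Omega[OF assms] closure_of_provable_rel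
  by (metis topspace_omega_top topspace_prod_topology)

lemma provable_rel_map:
  assumes wf: "wf_pseudoidentities \<Sigma>"
    and mc: "continuous_map (omega_top A) (omega_top A) \<mu>"
    and ms: "\<And>a b. (a, b) \<in> Sigma0 \<Sigma> A \<Longrightarrow> (\<mu> a, \<mu> b) \<in> provable_rel \<Sigma> A"
    and xy: "(x, y) \<in> provable_rel \<Sigma> A"
  shows "(\<mu> x, \<mu> y) \<in> provable_rel \<Sigma> A"
proof -
  let ?P = "provable_rel \<Sigma> A" and ?m = "\<lambda>z. (\<mu> (fst z), \<mu> (snd z))"
  let ?R = "{z \<in> ?P. ?m z \<in> ?P}"
  have "Sigma0 \<Sigma> A \<subseteq> ?R" using Sigma0_subset_provable_rel ms by fastforce
  moreover have "trans ?R"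
  proof (rule transI)
    fix x y z assume "(x, y) \<in> ?R" "(y, z) \<in> ?R"
    then show "(x, z) \<in> ?R"
      using provable_rel_trans[of x y \<Sigma> A z] provable_rel_trans[of "\<mu> x" "\<mu> y" \<Sigma> A "\<mu> z"] by simp
  qed
  moreover have "closedin (omega_top2 A) ?R"
  proof -
    have "continuous_map (omega_top2 A) (omega_top2 A) ?m"
      using continuous_map_compose[OF continuous_map_fst mc] continuous_map_compose[OF continuous_map_snd mc]
      by (intro continuous_map_pairedI) (simp_all add: o_def)
    then have "closedin (omega_top2 A) {z \<in> topspace (omega_top2 A). ?m z \<in> ?P}"
      by (rule closedin_continuous_map_preimage[OF _ closedin_provable_rel[OF wf]])
    then have "closedin (omega_top2 A) (?P \<inter> {z \<in> topspace (omega_top2 A). ?m z \<in> ?P})"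
      by (rule closedin_Int[OF closedin_provable_rel[OF wf]])
    moreover have "?P \<inter> {z \<in> topspace (omega_top2 A). ?m z \<in> ?P} = ?R"
      using provable_rel_subset_Omega[OF wf] by auto
    ultimately show ?thesis by simp
  qed
  ultimately have "?P \<subseteq> ?R" by (rule provable_rel_least)
  then have "(x, y) \<in> ?R" using xy by (rule subsetD)
  then show ?thesis by simp
qed

lemma provable_rel_sym:
  assumes wf: "wf_pseudoidentities \<Sigma>" and xy: "(x, y) \<in> provable_rel \<Sigma> A"
  shows "(y, x) \<in> provable_rel \<Sigma> A"
proof -
  let ?P = "provable_rel \<Sigma> A" and ?sw = "\<lambda>z. (snd z, fst z)"
  have "Sigma0 \<Sigma> A \<subseteq> converse ?P"
  proof (rule subsetI)
    fix z assume z: "z \<in> Sigma0 \<Sigma> A"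
    obtain a b where ab: "z = (a, b)" by (cases z)
    have "(b, a) \<in> Sigma0 \<Sigma> A" using z unfolding ab by (rule Sigma0_swap)
    then have "(b, a) \<in> ?P" by (rule subsetD[OF Sigma0_subset_provable_rel])
    then show "z \<in> converse ?P" unfolding ab by simp
  qed
  moreover have "trans (converse ?P)"
    using provable_rel_trans unfolding trans_def by blast
  moreover have "closedin (omega_top2 A) (converse ?P)"
  proof -
    have "continuous_map (omega_top2 A) (omega_top2 A) ?sw"
      by (rule continuous_map_pairedI[OF continuous_map_snd continuous_map_fst])
    then have "closedin (omega_top2 A) {z \<in> topspace (omega_top2 A). ?sw z \<in> ?P}"
      by (rule closedin_continuous_map_preimage[OF _ closedin_provable_rel[OF wf]])
    moreover have "{z \<in> topspace (omega_top2 A). ?sw z \<in> ?P} = converse ?P"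
      using provable_rel_subset_Omega[OF wf] by auto
    ultimately show ?thesis by simp
  qed
  ultimately have "?P \<subseteq> converse ?P" by (rule provable_rel_least)
  then have "(x, y) \<in> converse ?P" using xy by (rule subsetD)
  then show ?thesis by simp
qed

lemma provable_rel_refl:
  assumes ne: "\<Sigma> \<noteq> {}" and w: "w \<in> Omega A"
  shows "(w, w) \<in> provable_rel \<Sigma> A"
proof -
  obtain B l r where lr: "(B, l, r) \<in> \<Sigma>" using ne by auto
  have ch: "cont_hom B A (subst_pw A B (\<lambda>_. w))" using w by (intro cont_hom_subst_pw) simp
  text \<open>The instance \<open>t(\<phi>(l), w) = t(\<phi>(r), w)\<close> with \<open>t\<close> the variable receiving \<open>w\<close>.\<close>
  have "(teval A ((\<lambda>_. w)(0 := subst_pw A B (\<lambda>_. w) l)) (TVar 1),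
         teval A ((\<lambda>_. w)(0 := subst_pw A B (\<lambda>_. w) r)) (TVar 1)) \<in> Sigma0 \<Sigma> A"
    by (rule Sigma0I[OF disjI1[OF lr] ch]) (use w in simp)
  then have "(w, w) \<in> Sigma0 \<Sigma> A" by simp
  then show ?thesis by (rule subsetD[OF Sigma0_subset_provable_rel])
qed

lemma provable_rel_instance:
  assumes "(B, l, r) \<in> \<Sigma>" "cont_hom B A f" "w \<in> Omega A"
  shows "(f l, f r) \<in> provable_rel \<Sigma> A"
proof -
  have "(teval A ((\<lambda>_. w)(0 := f l)) (TVar 0), teval A ((\<lambda>_. w)(0 := f r)) (TVar 0)) \<in> Sigma0 \<Sigma> A"
    by (rule Sigma0I[OF disjI1[OF assms(1)] assms(2)]) (use assms(3) in simp)
  then have "(f l, f r) \<in> Sigma0 \<Sigma> A" by simp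
  then show ?thesis by (rule subsetD[OF Sigma0_subset_provable_rel])
qed

fun term_shift :: "sg_term \<Rightarrow> sg_term" where
  "term_shift (TVar 0) = TVar 0"
| "term_shift (TVar (Suc i)) = TVar (Suc (Suc i))"
| "term_shift (TMul a b) = TMul (term_shift a) (term_shift b)"

lemma teval_term_shift:
  "teval A ((\<lambda>i. if i = 1 then c else if i = 0 then \<rho> 0 else \<rho> (i - 1))(0 := z)) (term_shift t)
   = teval A (\<rho>(0 := z)) t"
proof (induction t)
  case (TVar i) then show ?case by (cases i) auto
qed simp

text \<open>Multiplying an elementary instance by \<open>c\<close> gives another one: shift the
  parameter variables of its term up by one and put \<open>c\<close> in variable 1.\<close>

lemma Sigma0_pmul:
  assumes "(a, b) \<in> Sigma0 \<Sigma> A" "c \<in> Omega A"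
  shows "(pmul A c a, pmul A c b) \<in> Sigma0 \<Sigma> A" and "(pmul A a c, pmul A b c) \<in> Sigma0 \<Sigma> A"
proof -
  obtain B u v f \<rho> t where z: "(a, b) = (teval A (\<rho>(0 := f u)) t, teval A (\<rho>(0 := f v)) t)"
    "(B, u, v) \<in> \<Sigma> \<or> (B, v, u) \<in> \<Sigma>" "cont_hom B A f" "\<forall>i. \<rho> i \<in> Omega A"
    by (rule Sigma0E[OF assms(1)])
  define \<rho>' where "\<rho>' = (\<lambda>i. if i = 1 then c else if i = 0 then \<rho> 0 else \<rho> (i - 1))"
  have \<rho>': "\<forall>i. \<rho>' i \<in> Omega A" "\<rho>' 1 = c" using z(4) assms(2) unfolding \<rho>'_def by auto
  have "teval A (\<rho>'(0 := f u)) (term_shift t) = teval A (\<rho>(0 := f u)) t"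
    "teval A (\<rho>'(0 := f v)) (term_shift t) = teval A (\<rho>(0 := f v)) t"
    unfolding \<rho>'_def by (rule teval_term_shift)+
  then have sh: "teval A (\<rho>'(0 := f u)) (term_shift t) = a" "teval A (\<rho>'(0 := f v)) (term_shift t) = b"
    using z(1) by simp_all
  show "(pmul A c a, pmul A c b) \<in> Sigma0 \<Sigma> A"
    using Sigma0I[OF z(2,3) \<rho>'(1), of "TMul (TVar 1) (term_shift t)"] sh \<rho>'(2) by simp
  show "(pmul A a c, pmul A b c) \<in> Sigma0 \<Sigma> A"
    using Sigma0I[OF z(2,3) \<rho>'(1), of "TMul (term_shift t) (TVar 1)"] sh \<rho>'(2) by simp
qed

lemma provable_rel_pmul:
  assumes wf: "wf_pseudoidentities \<Sigma>" and xy: "(x, y) \<in> provable_rel \<Sigma> A" and c: "c \<in> Omega A"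
  shows "(pmul A c x, pmul A c y) \<in> provable_rel \<Sigma> A"
    and "(pmul A x c, pmul A y c) \<in> provable_rel \<Sigma> A"
   by (rule provable_rel_map[OF wf continuous_map_pmul(1)[OF c] _ xy],
       rule subsetD[OF Sigma0_subset_provable_rel], erule Sigma0_pmul(1)[OF _ c])
      (rule provable_rel_map[OF wf continuous_map_pmul(2)[OF c] _ xy],
       rule subsetD[OF Sigma0_subset_provable_rel], erule Sigma0_pmul(2)[OF _ c])

fun teval_sg :: "fsg \<Rightarrow> (nat \<Rightarrow> nat) \<Rightarrow> sg_term \<Rightarrow> nat" where
  "teval_sg S v (TVar i) = v i"
| "teval_sg S v (TMul a b) = snd S (teval_sg S v a) (teval_sg S v b)"

lemma teval_adm: "adm A S \<phi> \<Longrightarrow> teval A \<rho> t S \<phi> = teval_sg S (\<lambda>i. \<rho> i S \<phi>) t"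
  by (induction t) (simp_all add: pmul_adm)

lemma holds_in_cont_hom:
  assumes hi: "holds_in S B u v" and f: "cont_hom B A f" and a: "adm A S \<phi>"
  shows "f u S \<phi> = f v S \<phi>"
proof -
  have "(\<lambda>w. f w S \<phi>) \<in> Omega B \<rightarrow> fst S" using f OmegaD(1)[OF _ a] unfolding cont_hom_def by auto
  moreover have "continuous_map (omega_top B) (discrete_topology (fst S)) (\<lambda>w. f w S \<phi>)"
    using continuous_map_compose[OF _ continuous_map_ev[OF a], of _ f] f
    unfolding cont_hom_def o_def by blast
  moreover have "\<forall>x\<in>Omega B. \<forall>y\<in>Omega B. f (pmul B x y) S \<phi> = snd S (f x S \<phi>) (f y S \<phi>)"
    using f a unfolding cont_hom_def by (simp add: pmul_adm)
  ultimately show ?thesis using hi unfolding holds_in_def by blast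
qed

lemma models_holds_in:
  assumes "models S \<Sigma>" "(B, u, v) \<in> \<Sigma> \<or> (B, v, u) \<in> \<Sigma>"
  shows "holds_in S B u v"
proof -
  have h: "\<forall>(B, u, v) \<in> \<Sigma>. holds_in S B u v" using assms(1) unfolding models_def by (rule conjunct2)
  from assms(2) show ?thesis
  proof
    assume "(B, u, v) \<in> \<Sigma>" then show ?thesis using h by fast
  next
    assume "(B, v, u) \<in> \<Sigma>" then have "holds_in S B v u" using h by fast
    then show ?thesis unfolding holds_in_def by metis
  qed
qed

lemma provable_rel_sound:
  assumes wf: "wf_pseudoidentities \<Sigma>" and a: "adm A S \<phi>" and m: "models S \<Sigma>"
    and xy: "(x, y) \<in> provable_rel \<Sigma> A"
  shows "x S \<phi> = y S \<phi>"
proof -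
  let ?R = "{z \<in> topspace (omega_top2 A). fst z S \<phi> = snd z S \<phi>}"
  have "Sigma0 \<Sigma> A \<subseteq> ?R"
  proof
    fix z assume z0: "z \<in> Sigma0 \<Sigma> A"
    then obtain B u v f \<rho> t where z: "z = (teval A (\<rho>(0 := f u)) t, teval A (\<rho>(0 := f v)) t)"
      "(B, u, v) \<in> \<Sigma> \<or> (B, v, u) \<in> \<Sigma>" "cont_hom B A f" "\<forall>i. \<rho> i \<in> Omega A"
      by (rule Sigma0E)
    have "f u S \<phi> = f v S \<phi>" by (rule holds_in_cont_hom[OF models_holds_in[OF m z(2)] z(3) a])
    then have "(\<lambda>i. (\<rho>(0 := f u)) i S \<phi>) = (\<lambda>i. (\<rho>(0 := f v)) i S \<phi>)" by auto
    then show "z \<in> ?R" using Sigma0_subset_Omega[OF wf] z0 a by (auto simp: z(1) teval_adm)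
  qed
  moreover have "closedin (omega_top2 A) ?R"
    using continuous_map_compose[OF continuous_map_fst continuous_map_ev[OF a]]
      continuous_map_compose[OF continuous_map_snd continuous_map_ev[OF a]]
    by (intro closedin_continuous_maps_eq[OF Hausdorff_space_discrete_topology]) (simp_all add: o_def)
  moreover have "trans ?R" unfolding trans_def by simp
  ultimately have "provable_rel \<Sigma> A \<subseteq> ?R"
    using provable_rel_least[of \<Sigma> A ?R] by simp
  then have "(x, y) \<in> ?R" using xy by (rule subsetD)
  then show ?thesis by simp
qed

section \<open>The rectangular band of first and last letters\<close>

text \<open>The rectangular band \<open>A \<times> A\<close> with \<open>(a, b) (c, d) = (a, d)\<close>, coded by \<open>prod_encode\<close>;
  evaluating at the generators \<open>a \<mapsto> (a, a)\<close> gives the first and the last letter.\<close>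

definition rect_band :: "nat set \<Rightarrow> fsg" where
  "rect_band A = (prod_encode ` (A \<times> A), \<lambda>x y. prod_encode (fst (prod_decode x), snd (prod_decode y)))"

definition rect_band_gens :: "nat set \<Rightarrow> nat \<Rightarrow> nat" where
  "rect_band_gens A = restrict (\<lambda>a. prod_encode (a, a)) A"

definition rect_band_ev :: "nat set \<Rightarrow> nat pw \<Rightarrow> nat" where
  "rect_band_ev A w = w (rect_band A) (rect_band_gens A)"

definition first_letter :: "nat set \<Rightarrow> nat pw \<Rightarrow> nat" where
  "first_letter A w = fst (prod_decode (rect_band_ev A w))"

definition last_letter :: "nat set \<Rightarrow> nat pw \<Rightarrow> nat" where
  "last_letter A w = snd (prod_decode (rect_band_ev A w))"

lemma fin_sg_rect_band: "finite A \<Longrightarrow> fin_sg (rect_band A)"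
  unfolding fin_sg_def rect_band_def by auto

lemma adm_rect_band: "finite A \<Longrightarrow> adm A (rect_band A) (rect_band_gens A)"
  unfolding adm_def rect_band_gens_def using fin_sg_rect_band by (auto simp: rect_band_def)

lemma rect_band_ev_in: "finite A \<Longrightarrow> w \<in> Omega A \<Longrightarrow> rect_band_ev A w \<in> prod_encode ` (A \<times> A)"
  unfolding rect_band_ev_def using OmegaD(1)[OF _ adm_rect_band] by (simp add: rect_band_def)

lemma first_letter_in: "finite A \<Longrightarrow> w \<in> Omega A \<Longrightarrow> first_letter A w \<in> A"
  unfolding first_letter_def using rect_band_ev_in by fastforce

lemma last_letter_in: "finite A \<Longrightarrow> w \<in> Omega A \<Longrightarrow> last_letter A w \<in> A"
  unfolding last_letter_def using rect_band_ev_in by fastforce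

lemma letters_gen:
  assumes "finite A" "a \<in> A"
  shows "first_letter A (gen A a) = a" "last_letter A (gen A a) = a"
  using gen_adm[OF adm_rect_band[OF assms(1)], of a] assms(2)
  by (simp_all add: first_letter_def last_letter_def rect_band_ev_def rect_band_gens_def)

lemma letters_pmul:
  assumes "finite A"
  shows "first_letter A (pmul A x y) = first_letter A x" "last_letter A (pmul A x y) = last_letter A y"
  using pmul_adm[OF adm_rect_band[OF assms], of x y]
  by (simp_all add: first_letter_def last_letter_def rect_band_ev_def rect_band_def)

lemma words_last_letter:
  assumes A: "finite A" and t: "t \<in> words A"
  shows "t = gen A (last_letter A t) \<or> (\<exists>p\<in>Omega A. t = pmul A p (gen A (last_letter A t)))"
  using t
proof (induction rule: words.induct)
  case (words_gen a)
  then show ?case using letters_gen[OF A] by simp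
next
  case (words_mul x y)
  let ?b = "last_letter A y"
  have xy: "x \<in> Omega A" "y \<in> Omega A" using words_Omega[OF words_mul(1)] words_Omega[OF words_mul(2)] .
  have gb: "gen A ?b \<in> Omega A" by (rule gen_Omega[OF last_letter_in[OF A xy(2)]])
  have "\<exists>p\<in>Omega A. pmul A x y = pmul A p (gen A ?b)"
    using words_mul.IH(2)
  proof
    assume "y = gen A ?b"
    then show ?thesis by (intro bexI[OF _ xy(1)]) (erule arg_cong)
  next
    assume "\<exists>p\<in>Omega A. y = pmul A p (gen A ?b)"
    then obtain p where p: "p \<in> Omega A" "y = pmul A p (gen A ?b)" by blast
    from p(2) have "pmul A x y = pmul A x (pmul A p (gen A ?b))" by (rule arg_cong)
    also have "\<dots> = pmul A (pmul A x p) (gen A ?b)" by (rule pmul_assoc[OF xy(1) p(1) gb, symmetric])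
    finally have "pmul A x y = pmul A (pmul A x p) (gen A ?b)" .
    then show ?thesis using pmul_Omega[OF xy(1) p(1)] by blast
  qed
  then show ?case using letters_pmul[OF A] by simp
qed

lemma words_first_letter:
  assumes A: "finite A" and t: "t \<in> words A"
  shows "t = gen A (first_letter A t) \<or> (\<exists>p\<in>Omega A. t = pmul A (gen A (first_letter A t)) p)"
  using t
proof (induction rule: words.induct)
  case (words_gen a)
  then show ?case using letters_gen[OF A] by simp
next
  case (words_mul x y)
  let ?a = "first_letter A x"
  have xy: "x \<in> Omega A" "y \<in> Omega A" using words_Omega[OF words_mul(1)] words_Omega[OF words_mul(2)] .
  have ga: "gen A ?a \<in> Omega A" by (rule gen_Omega[OF first_letter_in[OF A xy(1)]])
  have "\<exists>p\<in>Omega A. pmul A x y = pmul A (gen A ?a) p"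
    using words_mul.IH(1)
  proof
    assume "x = gen A ?a"
    then show ?thesis by (intro bexI[OF _ xy(2)]) (erule arg_cong[where f = "\<lambda>z. pmul A z y"])
  next
    assume "\<exists>p\<in>Omega A. x = pmul A (gen A ?a) p"
    then obtain p where p: "p \<in> Omega A" "x = pmul A (gen A ?a) p" by blast
    from p(2) have "pmul A x y = pmul A (pmul A (gen A ?a) p) y"
      by (rule arg_cong[where f = "\<lambda>z. pmul A z y"])
    also have "\<dots> = pmul A (gen A ?a) (pmul A p y)" by (rule pmul_assoc[OF ga p(1) xy(2)])
    finally have "pmul A x y = pmul A (gen A ?a) (pmul A p y)" .
    then show ?thesis using pmul_Omega[OF p(1) xy(2)] by blast
  qed
  then show ?case using letters_pmul[OF A] by simp
qed

text \<open>Otherwise a basic neighbourhood of \<open>x\<close> missing the closed set \<open>K\<close>, refined to see the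
  letters, contains a word with the letters of \<open>x\<close>.\<close>

lemma mem_compactin_by_words:
  assumes A: "finite A" and x: "x \<in> Omega A"
    and K: "compactin (omega_top A) K"
    and words: "\<And>t. t \<in> words A \<Longrightarrow> rect_band_ev A t = rect_band_ev A x \<Longrightarrow> t \<in> K"
  shows "x \<in> K"
proof (rule ccontr)
  assume "x \<notin> K"
  moreover have "closedin (omega_top A) K" by (rule compactin_imp_closedin[OF Hausdorff_omega_top K])
  ultimately have "openin (omega_top A) (Omega A - K)" "x \<in> Omega A - K"
    using x unfolding closedin_def by auto
  then obtain S \<phi> where S: "adm A S \<phi>" "{y \<in> Omega A. y S \<phi> = x S \<phi>} \<subseteq> Omega A - K"
    by (rule omega_top_ev_nbhd)
  obtain S' \<phi>' where S': "adm A S' \<phi>'" "ev_refines A S' \<phi>' S \<phi>"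
    "ev_refines A S' \<phi>' (rect_band A) (rect_band_gens A)"
    by (rule ev_refines_common[OF S(1) adm_rect_band[OF A]])
  obtain t where t: "t \<in> words A" "t S' \<phi>' = x S' \<phi>'" by (rule words_dense[OF x S'(1)])
  have tO: "t \<in> Omega A" by (rule words_Omega[OF t(1)])
  have "t S \<phi> = x S \<phi>" using S'(2) tO x t(2) unfolding ev_refines_def by blast
  then have "t \<notin> K" using S(2) tO by blast
  moreover have "rect_band_ev A t = rect_band_ev A x"
    using S'(3) tO x t(2) unfolding ev_refines_def rect_band_ev_def by blast
  ultimately show False using words[OF t(1)] by blast
qed

lemma Omega_last_letter_factor:
  assumes A: "finite A" and x: "x \<in> Omega A"
  shows "x = gen A (last_letter A x) \<or> (\<exists>p\<in>Omega A. x = pmul A p (gen A (last_letter A x)))"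
proof -
  let ?g = "gen A (last_letter A x)"
  have g: "?g \<in> Omega A" using gen_Omega[OF last_letter_in[OF A x]] .
  have "compactin (omega_top A) ((\<lambda>p. pmul A p ?g) ` topspace (omega_top A))"
    using image_compactin compact_space_omega_top continuous_map_pmul(2)[OF g]
    unfolding compact_space_def by blast
  then have "compactin (omega_top A) ({?g} \<union> (\<lambda>p. pmul A p ?g) ` Omega A)"
    using g by (intro compactin_Un) auto
  moreover have "t \<in> {?g} \<union> (\<lambda>p. pmul A p ?g) ` Omega A"
    if "t \<in> words A" "rect_band_ev A t = rect_band_ev A x" for t
    using words_last_letter[OF A that(1)] that(2) unfolding last_letter_def by auto
  ultimately have "x \<in> {?g} \<union> (\<lambda>p. pmul A p ?g) ` Omega A"
    by (rule mem_compactin_by_words[OF A x])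
  then show ?thesis by blast
qed

lemma Omega_first_letter_factor:
  assumes A: "finite A" and x: "x \<in> Omega A"
  shows "x = gen A (first_letter A x) \<or> (\<exists>p\<in>Omega A. x = pmul A (gen A (first_letter A x)) p)"
proof -
  let ?g = "gen A (first_letter A x)"
  have g: "?g \<in> Omega A" using gen_Omega[OF first_letter_in[OF A x]] .
  have "compactin (omega_top A) (pmul A ?g ` topspace (omega_top A))"
    using image_compactin compact_space_omega_top continuous_map_pmul(1)[OF g]
    unfolding compact_space_def by blast
  then have "compactin (omega_top A) ({?g} \<union> pmul A ?g ` Omega A)"
    using g by (intro compactin_Un) auto
  moreover have "t \<in> {?g} \<union> pmul A ?g ` Omega A"
    if "t \<in> words A" "rect_band_ev A t = rect_band_ev A x" for t
    using words_first_letter[OF A that(1)] that(2) unfolding first_letter_def by auto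
  ultimately have "x \<in> {?g} \<union> pmul A ?g ` Omega A"
    by (rule mem_compactin_by_words[OF A x])
  then show ?thesis by blast
qed

section \<open>A completeness criterion\<close>

lemma finite_kernel_rep:
  fixes e :: "'a \<Rightarrow> 'b::linorder"
  assumes R: "equiv X R" and fin: "finite (e ` X)"
    and ker: "\<And>x y. x \<in> X \<Longrightarrow> y \<in> X \<Longrightarrow> e x = e y \<Longrightarrow> (x, y) \<in> R"
  obtains rep where "\<And>x. x \<in> X \<Longrightarrow> rep x \<in> e ` X"
    and "\<And>x y. x \<in> X \<Longrightarrow> y \<in> X \<Longrightarrow> rep x = rep y \<longleftrightarrow> (x, y) \<in> R"
proof
  define rep where "rep x = Min (e ` R `` {x})" for x
  have cls: "R `` {x} \<subseteq> X" for x using equiv_type[OF R] by blast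
  have rep_mem: "rep x \<in> e ` R `` {x}" if "x \<in> X" for x
    unfolding rep_def
    using equiv_class_self[OF R that] finite_subset[OF image_mono[OF cls] fin] by (intro Min_in) auto
  show "rep x \<in> e ` X" if "x \<in> X" for x using rep_mem[OF that] cls by blast
  fix x y assume x: "x \<in> X" and y: "y \<in> X"
  show "rep x = rep y \<longleftrightarrow> (x, y) \<in> R"
  proof
    assume e: "rep x = rep y"
    obtain z1 z2 where z: "(x, z1) \<in> R" "(y, z2) \<in> R" "rep x = e z1" "rep y = e z2"
      using rep_mem[OF x] rep_mem[OF y] by blast
    then have "z1 \<in> X" "z2 \<in> X" using equiv_type[OF R] by auto
    then have "(z1, z2) \<in> R" using ker e z(3,4) by simp
    then show "(x, y) \<in> R"
      using z(1,2) R unfolding equiv_def by (meson symD transD)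
  next
    assume "(x, y) \<in> R"
    then show "rep x = rep y" unfolding rep_def using equiv_class_eq[OF R] by simp
  qed
qed

text \<open>The quotient of \<open>Omega A\<close> by the kernel of \<open>rep\<close>; classes are multiplied through
  representatives chosen by \<open>inv_into\<close>.\<close>

definition quotient_sg :: "'a set \<Rightarrow> ('a pw \<Rightarrow> nat) \<Rightarrow> fsg" where
  "quotient_sg A rep = (rep ` Omega A,
     \<lambda>a b. rep (pmul A (inv_into (Omega A) rep a) (inv_into (Omega A) rep b)))"

context
  fixes A :: "'a set" and rep :: "'a pw \<Rightarrow> nat"
  assumes cong: "\<And>x x' y y'. x \<in> Omega A \<Longrightarrow> x' \<in> Omega A \<Longrightarrow> y \<in> Omega A \<Longrightarrow> y' \<in> Omega A
      \<Longrightarrow> rep x = rep x' \<Longrightarrow> rep y = rep y' \<Longrightarrow> rep (pmul A x y) = rep (pmul A x' y')"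
begin

lemma quotient_sg_mul:
  "\<forall>x\<in>Omega A. \<forall>y\<in>Omega A. rep (pmul A x y) = snd (quotient_sg A rep) (rep x) (rep y)"
proof (intro ballI)
  let ?r = "inv_into (Omega A) rep"
  fix x y assume x: "x \<in> Omega A" and y: "y \<in> Omega A"
  have "?r (rep x) \<in> Omega A" "rep (?r (rep x)) = rep x" "?r (rep y) \<in> Omega A" "rep (?r (rep y)) = rep y"
    using x y by (simp_all add: inv_into_into f_inv_into_f)
  then have "rep (pmul A (?r (rep x)) (?r (rep y))) = rep (pmul A x y)"
    using cong x y by blast
  then show "rep (pmul A x y) = snd (quotient_sg A rep) (rep x) (rep y)"
    by (simp add: quotient_sg_def)
qed

lemma fin_sg_quotient_sg:
  assumes fin: "finite (rep ` Omega A)" shows "fin_sg (quotient_sg A rep)"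
  unfolding fin_sg_def
proof (intro conjI ballI)
  note mul = quotient_sg_mul[rule_format]
  show "finite (fst (quotient_sg A rep))" using fin by (simp add: quotient_sg_def)
  fix a b assume "a \<in> fst (quotient_sg A rep)" "b \<in> fst (quotient_sg A rep)"
  then obtain x y where xy: "x \<in> Omega A" "y \<in> Omega A" and "a = rep x" "b = rep y"
    by (auto simp: quotient_sg_def)
  then have "snd (quotient_sg A rep) a b = rep (pmul A x y)" using mul by simp
  then show "snd (quotient_sg A rep) a b \<in> fst (quotient_sg A rep)"
    using imageI[OF pmul_Omega[OF xy], of rep] by (simp add: quotient_sg_def)
next
  note mul = quotient_sg_mul[rule_format]
  fix a b c assume "a \<in> fst (quotient_sg A rep)" "b \<in> fst (quotient_sg A rep)"
    "c \<in> fst (quotient_sg A rep)"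
  then obtain x y z where xyz: "x \<in> Omega A" "y \<in> Omega A" "z \<in> Omega A"
    and abc: "a = rep x" "b = rep y" "c = rep z"
    by (auto simp: quotient_sg_def)
  have "snd (quotient_sg A rep) (snd (quotient_sg A rep) a b) c = rep (pmul A (pmul A x y) z)"
    unfolding abc mul[OF xyz(1,2), symmetric] mul[OF pmul_Omega[OF xyz(1,2)] xyz(3)] ..
  also have "\<dots> = rep (pmul A x (pmul A y z))" by (simp only: pmul_assoc[OF xyz])
  also have "\<dots> = snd (quotient_sg A rep) a (snd (quotient_sg A rep) b c)"
    unfolding abc mul[OF xyz(2,3), symmetric] mul[OF xyz(1) pmul_Omega[OF xyz(2,3)]] ..
  finally show "snd (quotient_sg A rep) (snd (quotient_sg A rep) a b) c
      = snd (quotient_sg A rep) a (snd (quotient_sg A rep) b c)" .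
qed

end

text \<open>Lift the images of the generators along \<open>rep\<close> and substitute.\<close>

lemma cont_hom_lift:
  assumes T: "fin_sg T"
    and rep: "rep \<in> Omega A \<rightarrow> fst T" "fst T \<subseteq> rep ` Omega A"
      "continuous_map (omega_top A) (discrete_topology (fst T)) rep"
      "\<forall>x\<in>Omega A. \<forall>y\<in>Omega A. rep (pmul A x y) = snd T (rep x) (rep y)"
    and h: "h \<in> Omega B \<rightarrow> fst T" "continuous_map (omega_top B) (discrete_topology (fst T)) h"
      "\<forall>x\<in>Omega B. \<forall>y\<in>Omega B. h (pmul B x y) = snd T (h x) (h y)"
  obtains f where "cont_hom B A f" "\<And>w. w \<in> Omega B \<Longrightarrow> h w = rep (f w)"
proof
  define g where "g b = inv_into (Omega A) rep (h (gen B b))" for b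
  have hgen: "h (gen B b) \<in> rep ` Omega A" if "b \<in> B" for b
    using h(1) gen_Omega[OF that] rep(2) by blast
  have g: "\<forall>b\<in>B. g b \<in> Omega A" unfolding g_def using hgen by (simp add: inv_into_into)
  let ?f = "subst_pw A B g"
  show f: "cont_hom B A ?f" by (rule cont_hom_subst_pw[OF g])
  have fO: "?f \<in> Omega B \<rightarrow> Omega A" and fc: "continuous_map (omega_top B) (omega_top A) ?f"
    using f unfolding cont_hom_def by auto
  have k1: "(\<lambda>w. rep (?f w)) \<in> Omega B \<rightarrow> fst T" using fO rep(1) by auto
  have k2: "continuous_map (omega_top B) (discrete_topology (fst T)) (\<lambda>w. rep (?f w))"
    using continuous_map_compose[OF fc rep(3)] by (simp add: o_def)
  have k3: "\<forall>x\<in>Omega B. \<forall>y\<in>Omega B. rep (?f (pmul B x y)) = snd T (rep (?f x)) (rep (?f y))"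
  proof (intro ballI)
    fix x y assume xy: "x \<in> Omega B" "y \<in> Omega B"
    then have "?f x \<in> Omega A" "?f y \<in> Omega A" using fO by auto
    then show "rep (?f (pmul B x y)) = snd T (rep (?f x)) (rep (?f y))"
      using subst_pw_pmul[OF g xy] rep(4) by simp
  qed
  note k = k1 k2 k3
  have "rep (?f (gen B b)) = h (gen B b)" if b: "b \<in> B" for b
  proof -
    have "?f (gen B b) = g b" by (rule subst_pw_gen[OF g b])
    then show ?thesis using f_inv_into_f[OF hgen[OF b]] by (simp add: g_def)
  qed
  then have "restrict ((\<lambda>w. rep (?f w)) \<circ> gen B) B = restrict (h \<circ> gen B) B"
    by (intro restrict_ext) simp
  then show "h w = rep (?f w)" if "w \<in> Omega B" for w
    using continuous_hom_eq_ev[OF T h that] continuous_hom_eq_ev[OF T k that] by simp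
qed

locale rect_band_criterion =
  fixes \<Sigma> :: "('b set \<times> 'b pw \<times> 'b pw) set" and A :: "nat set"
  assumes wf: "wf_pseudoidentities \<Sigma>" and finite_A: "finite A" and nonempty: "\<Sigma> \<noteq> {}"
    and models_rect_band: "models (rect_band A) \<Sigma>"
    and gamma: "\<And>x y. x \<in> Omega A \<Longrightarrow> y \<in> Omega A
      \<Longrightarrow> (pmul A (omega_pt A (pmul A x y)) x, x) \<in> provable_rel \<Sigma> A"
begin

abbreviation Prov :: "(nat pw \<times> nat pw) set" where "Prov \<equiv> provable_rel \<Sigma> A"

lemma Prov_Omega: "(x, y) \<in> Prov \<Longrightarrow> x \<in> Omega A \<and> y \<in> Omega A"
  by (drule subsetD[OF provable_rel_subset_Omega[OF wf]]) simp

lemma Prov_sym: "(x, y) \<in> Prov \<Longrightarrow> (y, x) \<in> Prov"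
  by (rule provable_rel_sym[OF wf])

lemma Prov_refl: "x \<in> Omega A \<Longrightarrow> (x, x) \<in> Prov"
  by (rule provable_rel_refl[OF nonempty])

lemma Prov_rect_band_ev: "(x, y) \<in> Prov \<Longrightarrow> rect_band_ev A x = rect_band_ev A y"
  unfolding rect_band_ev_def by (rule provable_rel_sound[OF wf adm_rect_band[OF finite_A] models_rect_band])

lemma Prov_pmul_omega_right:
  assumes x: "x \<in> Omega A" and y: "y \<in> Omega A" and l: "last_letter A x = last_letter A y"
  shows "(pmul A x (omega_pt A y), x) \<in> Prov"
proof -
  define b where "b = last_letter A y"
  have gb: "gen A b \<in> Omega A" unfolding b_def by (rule gen_Omega[OF last_letter_in[OF finite_A y]])
  have y_fac: "y = gen A b \<or> (\<exists>p\<in>Omega A. y = pmul A p (gen A b))"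
    using Omega_last_letter_factor[OF finite_A y] unfolding b_def .
  have x_fac: "x = gen A b \<or> (\<exists>p\<in>Omega A. x = pmul A p (gen A b))"
    using Omega_last_letter_factor[OF finite_A x] unfolding b_def l .
  obtain q where q: "q \<in> Omega A" "omega_pt A y = omega_pt A (pmul A q (gen A b))"
    using y_fac omega_pt_square[OF gb] gb by metis
  text \<open>\<open>b (q b)\<^sup>\<omega> = (b q)\<^sup>\<omega> b\<close> is provably \<open>b\<close>.\<close>
  have gamma_b: "(pmul A (gen A b) (omega_pt A y), gen A b) \<in> Prov"
    using gamma[OF gb q(1)] omega_pt_pmul_shift[OF gb q(1)] q(2) by simp
  from x_fac show ?thesis
  proof
    assume "\<exists>p\<in>Omega A. x = pmul A p (gen A b)"
    then obtain p where p: "p \<in> Omega A" "x = pmul A p (gen A b)" by blast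
    have "pmul A x (omega_pt A y) = pmul A p (pmul A (gen A b) (omega_pt A y))"
      using p pmul_assoc[OF p(1) gb omega_pt_Omega[OF y]] by simp
    then show ?thesis using provable_rel_pmul(1)[OF wf gamma_b p(1)] p(2) by simp
  qed (use gamma_b in simp)
qed

lemma Prov_pmul_omega_left:
  assumes x: "x \<in> Omega A" and y: "y \<in> Omega A" and l: "first_letter A x = first_letter A y"
  shows "(pmul A (omega_pt A y) x, x) \<in> Prov"
proof -
  define a where "a = first_letter A y"
  have ga: "gen A a \<in> Omega A" unfolding a_def by (rule gen_Omega[OF first_letter_in[OF finite_A y]])
  have y_fac: "y = gen A a \<or> (\<exists>p\<in>Omega A. y = pmul A (gen A a) p)"
    using Omega_first_letter_factor[OF finite_A y] unfolding a_def .
  have x_fac: "x = gen A a \<or> (\<exists>p\<in>Omega A. x = pmul A (gen A a) p)"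
    using Omega_first_letter_factor[OF finite_A x] unfolding a_def l .
  obtain q where q: "q \<in> Omega A" "omega_pt A y = omega_pt A (pmul A (gen A a) q)"
    using y_fac omega_pt_square[OF ga] ga by metis
  have gamma_a: "(pmul A (omega_pt A y) (gen A a), gen A a) \<in> Prov"
    using gamma[OF ga q(1)] q(2) by simp
  from x_fac show ?thesis
  proof
    assume "\<exists>p\<in>Omega A. x = pmul A (gen A a) p"
    then obtain p where p: "p \<in> Omega A" "x = pmul A (gen A a) p" by blast
    have "pmul A (omega_pt A y) x = pmul A (pmul A (omega_pt A y) (gen A a)) p"
      using p pmul_assoc[OF omega_pt_Omega[OF y] ga p(1)] by simp
    then show ?thesis using provable_rel_pmul(2)[OF wf gamma_a p(1)] p(2) by simp
  qed (use gamma_a in simp)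
qed

text \<open>\<open>prov_ker S \<phi>\<close> is the relation \<open>\<turnstile> \<circ> ker (S, \<phi>) \<circ> \<turnstile>\<close>.\<close>

definition prov_ker :: "fsg \<Rightarrow> (nat \<Rightarrow> nat) \<Rightarrow> (nat pw \<times> nat pw) set" where
  "prov_ker S \<phi> = {(x, y). \<exists>x' y'. (x, x') \<in> Prov \<and> x' S \<phi> = y' S \<phi> \<and> (y', y) \<in> Prov}"

definition letter_fine :: "fsg \<Rightarrow> (nat \<Rightarrow> nat) \<Rightarrow> bool" where
  "letter_fine S \<phi> \<longleftrightarrow> adm A S \<phi> \<and> ev_refines A S \<phi> (rect_band A) (rect_band_gens A)"

lemma prov_kerI: "(x, x') \<in> Prov \<Longrightarrow> x' S \<phi> = y' S \<phi> \<Longrightarrow> (y', y) \<in> Prov \<Longrightarrow> (x, y) \<in> prov_ker S \<phi>"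
  unfolding prov_ker_def by blast

lemma prov_kerE:
  assumes "(x, y) \<in> prov_ker S \<phi>"
  obtains x' y' where "(x, x') \<in> Prov" "x' S \<phi> = y' S \<phi>" "(y', y) \<in> Prov"
  using assms unfolding prov_ker_def by blast

lemma prov_ker_ev:
  "x \<in> Omega A \<Longrightarrow> y \<in> Omega A \<Longrightarrow> x S \<phi> = y S \<phi> \<Longrightarrow> (x, y) \<in> prov_ker S \<phi>"
  by (rule prov_kerI[OF Prov_refl _ Prov_refl])

lemma Prov_subset_prov_ker: "Prov \<subseteq> prov_ker S \<phi>"
proof
  fix z assume z: "z \<in> Prov"
  obtain x y where xy: "z = (x, y)" by (cases z)
  have "(x, y) \<in> Prov" using z unfolding xy .
  moreover have "(y, y) \<in> Prov" using Prov_refl Prov_Omega[OF calculation] by blast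
  ultimately show "z \<in> prov_ker S \<phi>" unfolding xy by (rule prov_kerI[OF _ refl])
qed

lemma prov_ker_pmul:
  assumes xy: "(x, y) \<in> prov_ker S \<phi>" and c: "c \<in> Omega A" and a: "adm A S \<phi>"
  shows "(pmul A c x, pmul A c y) \<in> prov_ker S \<phi>" and "(pmul A x c, pmul A y c) \<in> prov_ker S \<phi>"
proof -
  obtain x' y' where h: "(x, x') \<in> Prov" "x' S \<phi> = y' S \<phi>" "(y', y) \<in> Prov"
    using xy by (rule prov_kerE)
  show "(pmul A c x, pmul A c y) \<in> prov_ker S \<phi>"
    by (rule prov_kerI[OF provable_rel_pmul(1)[OF wf h(1) c] _ provable_rel_pmul(1)[OF wf h(3) c]])
      (use h(2) a in \<open>simp add: pmul_adm\<close>)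
  show "(pmul A x c, pmul A y c) \<in> prov_ker S \<phi>"
    by (rule prov_kerI[OF provable_rel_pmul(2)[OF wf h(1) c] _ provable_rel_pmul(2)[OF wf h(3) c]])
      (use h(2) a in \<open>simp add: pmul_adm\<close>)
qed

text \<open>With \<open>w = y\<^sub>1\<^bsup>\<omega>-1\<^esup>\<close>, the term \<open>x\<^sub>1 w x\<^sub>2\<close> is provably \<open>x\<^sub>1\<close> and has the same value as
  \<open>y\<^sub>1 w y\<^sub>2 = y\<^sub>1\<^sup>\<omega> y\<^sub>2\<close>, which is provably \<open>y\<^sub>2\<close>.\<close>

lemma prov_ker_trans:
  assumes F: "letter_fine S \<phi>" and xy: "(x, y) \<in> prov_ker S \<phi>" and yz: "(y, z) \<in> prov_ker S \<phi>"
  shows "(x, z) \<in> prov_ker S \<phi>"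
proof -
  have a: "adm A S \<phi>" and band: "ev_refines A S \<phi> (rect_band A) (rect_band_gens A)"
    using F unfolding letter_fine_def by auto
  obtain x1 y1 where h1: "(x, x1) \<in> Prov" "x1 S \<phi> = y1 S \<phi>" "(y1, y) \<in> Prov"
    using xy by (rule prov_kerE)
  obtain x2 y2 where h2: "(y, x2) \<in> Prov" "x2 S \<phi> = y2 S \<phi>" "(y2, z) \<in> Prov"
    using yz by (rule prov_kerE)
  have O: "x1 \<in> Omega A" "y1 \<in> Omega A" "x2 \<in> Omega A" "y2 \<in> Omega A"
    using Prov_Omega[OF h1(1)] Prov_Omega[OF h1(3)] Prov_Omega[OF h2(1)] Prov_Omega[OF h2(3)] by auto
  have y1x2: "(y1, x2) \<in> Prov" by (rule provable_rel_trans[OF h1(3) h2(1)])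
  have "rect_band_ev A x1 = rect_band_ev A y1" "rect_band_ev A x2 = rect_band_ev A y2"
    using band O h1(2) h2(2) unfolding ev_refines_def rect_band_ev_def by blast+
  moreover have "rect_band_ev A y1 = rect_band_ev A x2" by (rule Prov_rect_band_ev[OF y1x2])
  ultimately have l: "last_letter A x1 = last_letter A y1" "first_letter A y2 = first_letter A y1"
    unfolding first_letter_def last_letter_def by simp_all
  define w where "w = omega_pred_pt A y1"
  have wO: "w \<in> Omega A" unfolding w_def by (rule omega_pred_pt_Omega[OF O(2)])
  have "(pmul A (pmul A x1 w) x2, pmul A (pmul A x1 w) y1) \<in> Prov"
    by (rule provable_rel_pmul(1)[OF wf Prov_sym[OF y1x2] pmul_Omega[OF O(1) wO]])
  moreover have "pmul A (pmul A x1 w) y1 = pmul A x1 (omega_pt A y1)"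
    using pmul_assoc[OF O(1) wO O(2)] pmul_omega_pred_pt(2)[OF O(2)] unfolding w_def by simp
  ultimately have W1: "(pmul A (pmul A x1 w) x2, x1) \<in> Prov"
    using Prov_pmul_omega_right[OF O(1,2) l(1)] provable_rel_trans by metis
  have "pmul A (pmul A y1 w) y2 = pmul A (omega_pt A y1) y2"
    unfolding w_def using pmul_omega_pred_pt(1)[OF O(2)] by simp
  then have W2: "(pmul A (pmul A y1 w) y2, y2) \<in> Prov"
    using Prov_pmul_omega_left[OF O(4,2) l(2)] by simp
  show ?thesis
  proof (rule prov_kerI)
    show "(x, pmul A (pmul A x1 w) x2) \<in> Prov" by (rule provable_rel_trans[OF h1(1) Prov_sym[OF W1]])
    show "pmul A (pmul A x1 w) x2 S \<phi> = pmul A (pmul A y1 w) y2 S \<phi>"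
      using h1(2) h2(2) a by (simp add: pmul_adm)
    show "(pmul A (pmul A y1 w) y2, z) \<in> Prov" by (rule provable_rel_trans[OF W2 h2(3)])
  qed
qed

lemma prov_ker_Omega: "prov_ker S \<phi> \<subseteq> Omega A \<times> Omega A"
proof
  fix z assume "z \<in> prov_ker S \<phi>"
  then obtain x y x' y' where "z = (x, y)" "(x, x') \<in> Prov" "(y', y) \<in> Prov"
    unfolding prov_ker_def by blast
  then show "z \<in> Omega A \<times> Omega A" using Prov_Omega by auto
qed

lemma equiv_prov_ker:
  assumes F: "letter_fine S \<phi>" shows "equiv (Omega A) (prov_ker S \<phi>)"
proof (rule equivI)
  show "prov_ker S \<phi> \<subseteq> Omega A \<times> Omega A" by (rule prov_ker_Omega)
  show "refl_on (Omega A) (prov_ker S \<phi>)" by (rule refl_onI) (simp add: prov_ker_ev)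
  show "sym (prov_ker S \<phi>)"
  proof (rule symI)
    fix x y assume "(x, y) \<in> prov_ker S \<phi>"
    then obtain x' y' where "(x, x') \<in> Prov" "x' S \<phi> = y' S \<phi>" "(y', y) \<in> Prov"
      by (rule prov_kerE)
    then show "(y, x) \<in> prov_ker S \<phi>" by (intro prov_kerI[OF Prov_sym _ Prov_sym]) simp_all
  qed
  show "trans (prov_ker S \<phi>)" by (rule transI) (rule prov_ker_trans[OF F])
qed

end

context rect_band_criterion
begin

lemma models_quotient_sg:
  assumes T: "fin_sg (quotient_sg A rep)" and ne: "Omega A \<noteq> {}"
    and rep_cont: "continuous_map (omega_top A) (discrete_topology (rep ` Omega A)) rep"
    and rep_mul: "\<forall>x\<in>Omega A. \<forall>y\<in>Omega A. rep (pmul A x y) = snd (quotient_sg A rep) (rep x) (rep y)"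
    and rep_Prov: "\<And>x y. (x, y) \<in> Prov \<Longrightarrow> rep x = rep y"
  shows "models (quotient_sg A rep) \<Sigma>"
  unfolding models_def
proof (intro conjI T ballI)
  let ?T = "quotient_sg A rep"
  have fst_T: "fst ?T = rep ` Omega A" by (simp add: quotient_sg_def)
  obtain w where w: "w \<in> Omega A" using ne by blast
  fix z assume "z \<in> \<Sigma>"
  then obtain B l r where z: "z = (B, l, r)" "(B, l, r) \<in> \<Sigma>" by (metis prod.collapse)
  have "h l = h r"
    if h: "h \<in> Omega B \<rightarrow> fst ?T" "continuous_map (omega_top B) (discrete_topology (fst ?T)) h"
      "\<forall>x\<in>Omega B. \<forall>y\<in>Omega B. h (pmul B x y) = snd ?T (h x) (h y)" for h
  proof -
    obtain f where f: "cont_hom B A f" "\<And>w. w \<in> Omega B \<Longrightarrow> h w = rep (f w)"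
      by (rule cont_hom_lift[OF T _ _ _ rep_mul h]) (use rep_cont in \<open>auto simp: fst_T\<close>)
    have "l \<in> Omega B" "r \<in> Omega B" using wf z(2) unfolding wf_pseudoidentities_def by blast+
    then show ?thesis using f(2) rep_Prov[OF provable_rel_instance[OF z(2) f(1) w]] by simp
  qed
  then show "case z of (B, u, v) \<Rightarrow> holds_in ?T B u v" unfolding z(1) holds_in_def by auto
qed

lemma quotient_model:
  assumes F: "letter_fine S \<phi>" and u: "u \<in> Omega A" and v: "v \<in> Omega A"
    and uv: "(u, v) \<notin> prov_ker S \<phi>"
  shows "\<exists>T. models T \<Sigma> \<and> \<not> holds_in T A u v"
proof -
  have a: "adm A S \<phi>" using F unfolding letter_fine_def by simp
  have "(\<lambda>w. w S \<phi>) ` Omega A \<subseteq> fst S" using OmegaD(1)[OF _ a] by blast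
  then have fin: "finite ((\<lambda>w. w S \<phi>) ` Omega A)" using fin_sgD(1)[OF admD(1)[OF a]] finite_subset by blast
  obtain rep where rep_in: "\<And>x. x \<in> Omega A \<Longrightarrow> rep x \<in> (\<lambda>w. w S \<phi>) ` Omega A"
    and rep_eq: "\<And>x y. x \<in> Omega A \<Longrightarrow> y \<in> Omega A \<Longrightarrow> rep x = rep y \<longleftrightarrow> (x, y) \<in> prov_ker S \<phi>"
    using finite_kernel_rep[OF equiv_prov_ker[OF F] fin prov_ker_ev] by blast
  let ?T = "quotient_sg A rep"
  have "finite (rep ` Omega A)" using rep_in finite_subset[OF _ fin] by blast
  moreover have "rep (pmul A x y) = rep (pmul A x' y')"
    if "x \<in> Omega A" "x' \<in> Omega A" "y \<in> Omega A" "y' \<in> Omega A" "rep x = rep x'" "rep y = rep y'"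
    for x x' y y'
  proof -
    have "(pmul A x y, pmul A x' y) \<in> prov_ker S \<phi>" "(pmul A x' y, pmul A x' y') \<in> prov_ker S \<phi>"
      using prov_ker_pmul[of _ _ S \<phi>] a rep_eq that by simp_all
    then show ?thesis
      using prov_ker_trans[OF F] rep_eq pmul_Omega that by metis
  qed
  ultimately have T: "fin_sg ?T" and mul: "\<forall>x\<in>Omega A. \<forall>y\<in>Omega A. rep (pmul A x y) = snd ?T (rep x) (rep y)"
    using fin_sg_quotient_sg quotient_sg_mul by blast+
  have cont: "continuous_map (omega_top A) (discrete_topology (rep ` Omega A)) rep"
    by (rule continuous_map_discrete_ev_factor[OF a]) (use rep_eq prov_ker_ev in auto)
  have "models ?T \<Sigma>"
    using models_quotient_sg[OF T _ cont mul] rep_eq u Prov_subset_prov_ker Prov_Omega by blast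
  moreover have "\<not> holds_in ?T A u v"
    using cont mul rep_eq[OF u v] uv unfolding holds_in_def by (auto simp: quotient_sg_def)
  ultimately show ?thesis by blast
qed

lemma letter_fine_refinement:
  assumes "finite F" "F \<subseteq> adm_pairs A"
  obtains S \<phi> where "letter_fine S \<phi>" "\<forall>i\<in>F. ev_refines A S \<phi> (fst i) (snd i)"
proof -
  from assms have "\<exists>S \<phi>. letter_fine S \<phi> \<and> (\<forall>i\<in>F. ev_refines A S \<phi> (fst i) (snd i))"
  proof (induction F rule: finite_induct)
    case empty
    then show ?case unfolding letter_fine_def using adm_rect_band[OF finite_A] ev_refines_refl by blast
  next
    case (insert i F)
    then obtain S \<phi> where S: "letter_fine S \<phi>" "\<forall>j\<in>F. ev_refines A S \<phi> (fst j) (snd j)" by blast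
    have ai: "adm A (fst i) (snd i)" using insert.prems unfolding adm_pairs_def by blast
    have aS: "adm A S \<phi>" and band: "ev_refines A S \<phi> (rect_band A) (rect_band_gens A)"
      using S(1) unfolding letter_fine_def by auto
    obtain S' \<phi>' where S': "adm A S' \<phi>'" "ev_refines A S' \<phi>' S \<phi>" "ev_refines A S' \<phi>' (fst i) (snd i)"
      by (rule ev_refines_common[OF aS ai])
    have "letter_fine S' \<phi>'" unfolding letter_fine_def using S'(1) ev_refines_trans[OF S'(2) band] by blast
    moreover have "\<forall>j\<in>insert i F. ev_refines A S' \<phi>' (fst j) (snd j)"
      using S(2) S'(3) ev_refines_trans[OF S'(2)] by blast
    ultimately show ?case by blast
  qed
  then show ?thesis using that by blast
qed

definition ker_near :: "nat pw \<Rightarrow> fsg \<Rightarrow> (nat \<Rightarrow> nat) \<Rightarrow> nat pw set" where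
  "ker_near v S \<phi> = {x \<in> Omega A. \<exists>y\<in>Omega A. x S \<phi> = y S \<phi> \<and> (y, v) \<in> Prov}"

lemma closedin_ker_near: "adm A S \<phi> \<Longrightarrow> closedin (omega_top A) (ker_near v S \<phi>)"
  by (rule closedin_ev_saturated) (auto simp: ev_saturated_def ker_near_def)

lemma closedin_Prov_sections:
  "closedin (omega_top A) {x \<in> Omega A. (u, x) \<in> Prov}"
  "closedin (omega_top A) {x \<in> Omega A. (x, v) \<in> Prov}"
  if "u \<in> Omega A" "v \<in> Omega A"
proof -
  have "continuous_map (omega_top A) (omega_top2 A) (\<lambda>x. (u, x))"
    "continuous_map (omega_top A) (omega_top2 A) (\<lambda>x. (x, v))"
    using that by (auto intro!: continuous_map_pairedI)
  then show "closedin (omega_top A) {x \<in> Omega A. (u, x) \<in> Prov}"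
    "closedin (omega_top A) {x \<in> Omega A. (x, v) \<in> Prov}"
    using closedin_continuous_map_preimage[OF _ closedin_provable_rel[OF wf]] by fastforce+
qed

lemma Prov_if_ker_near:
  assumes v: "v \<in> Omega A" and x: "x \<in> Omega A"
    and near: "\<And>S \<phi>. letter_fine S \<phi> \<Longrightarrow> x \<in> ker_near v S \<phi>"
  shows "(x, v) \<in> Prov"
proof (rule ccontr)
  let ?V = "{y \<in> Omega A. (y, v) \<in> Prov}"
  assume "(x, v) \<notin> Prov"
  then have "x \<in> Omega A - ?V" using x by simp
  moreover have "openin (omega_top A) (Omega A - ?V)"
    using closedin_Prov_sections(2)[OF v v] unfolding closedin_def by simp
  ultimately obtain S1 \<phi>1 where S1: "adm A S1 \<phi>1" "{y \<in> Omega A. y S1 \<phi>1 = x S1 \<phi>1} \<subseteq> Omega A - ?V"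
    using omega_top_ev_nbhd by blast
  obtain S \<phi> where S: "letter_fine S \<phi>" "ev_refines A S \<phi> S1 \<phi>1"
    using letter_fine_refinement[of "{(S1, \<phi>1)}"] S1(1) unfolding adm_pairs_def by auto
  obtain y where y: "y \<in> Omega A" "x S \<phi> = y S \<phi>" "(y, v) \<in> Prov"
    using near[OF S(1)] unfolding ker_near_def by blast
  have "y S1 \<phi>1 = x S1 \<phi>1" using S(2) x y unfolding ev_refines_def by metis
  then show False using S1(2) y by blast
qed

lemma ker_near_fip:
  assumes all: "\<And>S \<phi>. letter_fine S \<phi> \<Longrightarrow> (u, v) \<in> prov_ker S \<phi>"
    and F: "finite F" "F \<subseteq> {i. letter_fine (fst i) (snd i)}"
  obtains x where "(u, x) \<in> Prov" "\<forall>i\<in>F. x \<in> ker_near v (fst i) (snd i)"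
proof -
  have "F \<subseteq> adm_pairs A" using F(2) unfolding letter_fine_def adm_pairs_def by auto
  then obtain S \<phi> where S: "letter_fine S \<phi>" "\<forall>i\<in>F. ev_refines A S \<phi> (fst i) (snd i)"
    using letter_fine_refinement[OF F(1)] by blast
  obtain x y where h: "(u, x) \<in> Prov" "x S \<phi> = y S \<phi>" "(y, v) \<in> Prov"
    using all[OF S(1)] by (rule prov_kerE)
  have O: "x \<in> Omega A" "y \<in> Omega A" using Prov_Omega[OF h(1)] Prov_Omega[OF h(3)] by auto
  have "x \<in> ker_near v (fst i) (snd i)" if "i \<in> F" for i
    using S(2) that O h(2,3) unfolding ev_refines_def ker_near_def by blast
  then show ?thesis using that h(1) by blast
qed

text \<open>By compactness, some \<open>x\<close> with \<open>u \<turnstile> x\<close> lies in every \<open>ker_near v S \<phi>\<close>; such an \<open>x\<close>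
  satisfies \<open>x \<turnstile> v\<close>.\<close>

lemma Prov_if_prov_ker:
  assumes u: "u \<in> Omega A" and v: "v \<in> Omega A"
    and all: "\<And>S \<phi>. letter_fine S \<phi> \<Longrightarrow> (u, v) \<in> prov_ker S \<phi>"
  shows "(u, v) \<in> Prov"
proof -
  let ?I = "{i. letter_fine (fst i) (snd i)}"
  define W where "W i = {x \<in> Omega A. (u, x) \<in> Prov} \<inter> ker_near v (fst i) (snd i)" for i
  have closed: "closedin (omega_top A) (W i)" if "i \<in> ?I" for i
    using that closedin_Prov_sections(1)[OF u v] closedin_ker_near
    unfolding W_def letter_fine_def by blast
  have fip: "\<Inter> \<F> \<noteq> {}" if fin: "finite \<F>" and sub: "\<F> \<subseteq> W ` ?I" for \<F>
  proof -
    obtain F where F: "F \<subseteq> ?I" "finite F" "\<F> = W ` F"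
      using finite_subset_image[OF fin sub] by blast
    obtain x where "(u, x) \<in> Prov" "\<forall>i\<in>F. x \<in> ker_near v (fst i) (snd i)"
      by (rule ker_near_fip[OF all F(2,1)])
    then have "x \<in> \<Inter> \<F>" using Prov_Omega unfolding F(3) W_def by blast
    then show ?thesis by blast
  qed
  have "\<Inter> (W ` ?I) \<noteq> {}"
    using compact_space_omega_top[unfolded compact_space_fip, rule_format, of "W ` ?I"] closed fip
    by blast
  then obtain x where x: "x \<in> \<Inter> (W ` ?I)" by blast
  have "(rect_band A, rect_band_gens A) \<in> ?I"
    unfolding letter_fine_def using adm_rect_band[OF finite_A] ev_refines_refl by simp
  then have ux: "x \<in> Omega A" "(u, x) \<in> Prov" using x unfolding W_def by blast+
  have "x \<in> ker_near v S \<phi>" if "letter_fine S \<phi>" for S \<phi>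
  proof -
    have "(S, \<phi>) \<in> ?I" using that by simp
    then have "x \<in> W (S, \<phi>)" using x by blast
    then show ?thesis by (simp add: W_def)
  qed
  then have "(x, v) \<in> Prov" by (rule Prov_if_ker_near[OF v ux(1)])
  then show ?thesis by (rule provable_rel_trans[OF ux(2)])
qed

lemma Prov_complete:
  assumes "u \<in> Omega A" "v \<in> Omega A" "\<forall>T. models T \<Sigma> \<longrightarrow> holds_in T A u v"
  shows "(u, v) \<in> Prov"
  using Prov_if_prov_ker quotient_model assms by blast

end

lemma h_strongI:
  assumes wf: "wf_pseudoidentities \<Sigma>" and ne: "\<Sigma> \<noteq> {}"
    and models: "\<And>A. finite A \<Longrightarrow> models (rect_band A) \<Sigma>"
    and gamma: "\<And>(A :: nat set) x y. finite A \<Longrightarrow> x \<in> Omega A \<Longrightarrow> y \<in> Omega A \<Longrightarrow>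
        (pmul A (omega_pt A (pmul A x y)) x, x) \<in> provable_rel \<Sigma> A"
  shows "h_strong \<Sigma>"
  unfolding h_strong_def
proof (intro allI impI)
  fix A :: "nat set" and u v
  assume h: "finite A \<and> u \<in> Omega A \<and> v \<in> Omega A \<and> (\<forall>T. models T \<Sigma> \<longrightarrow> holds_in T A u v)"
  then interpret rect_band_criterion \<Sigma> A
    using wf ne models gamma by unfold_locales auto
  show "(u, v) \<in> provable_rel \<Sigma> A" using Prov_complete h by blast
qed

section \<open>The pseudoidentities \<open>\<Sigma>\<close> and \<open>\<Gamma>\<close>\<close>

lemma holds_inI:
  assumes T: "fin_sg T" and l: "l \<in> Omega B" and r: "r \<in> Omega B"
    and eq: "\<And>\<psi>. adm B T \<psi> \<Longrightarrow> l T \<psi> = r T \<psi>"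
  shows "holds_in T B l r"
  unfolding holds_in_def
proof (intro allI impI)
  fix h assume h: "h \<in> Omega B \<rightarrow> fst T \<and> continuous_map (omega_top B) (discrete_topology (fst T)) h \<and>
      (\<forall>x\<in>Omega B. \<forall>y\<in>Omega B. h (pmul B x y) = snd T (h x) (h y))"
  have "h (gen B b) \<in> fst T" if "b \<in> B" for b using h gen_Omega[OF that] by blast
  then have "adm B T (restrict (h \<circ> gen B) B)" using T unfolding adm_def by auto
  then show "h l = h r"
    using eq continuous_hom_eq_ev[OF T _ _ _ l] continuous_hom_eq_ev[OF T _ _ _ r] h by metis
qed

lemma rect_band_idem: "x \<in> fst (rect_band A) \<Longrightarrow> snd (rect_band A) x x = x"
  by (auto simp: rect_band_def)

lemma rect_band_absorb: "x \<in> fst (rect_band A) \<Longrightarrow> snd (rect_band A) (snd (rect_band A) x y) x = x"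
  by (auto simp: rect_band_def)

lemma sg_pow_idem: "snd S s s = s \<Longrightarrow> sg_pow S s n = s"
  by (induction n) simp_all

lemma Bxy_mem: "0 \<in> Bxy" "1 \<in> Bxy"
  unfolding Bxy_def by simp_all

abbreviation gen_x :: "nat pw" where "gen_x \<equiv> gen Bxy 0"
abbreviation gen_y :: "nat pw" where "gen_y \<equiv> gen Bxy 1"

lemma gen_xy_Omega: "gen_x \<in> Omega Bxy" "gen_y \<in> Omega Bxy"
  using gen_Omega[OF Bxy_mem(1)] gen_Omega[OF Bxy_mem(2)] .

lemma SigmaPI_eq: "SigmaPI =
    {(Bxy, omega_pt Bxy (pmul Bxy (pmul Bxy gen_x gen_y) gen_x), omega_pt Bxy gen_x),
     (Bxy, pmul Bxy (omega_pt Bxy gen_x) gen_x, gen_x)}"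
  unfolding SigmaPI_def Let_def
  using omega_eq_omega_pt[OF gen_xy_Omega(1)]
    omega_eq_omega_pt[OF pmul_Omega[OF pmul_Omega[OF gen_xy_Omega] gen_xy_Omega(1)]]
  by simp

lemma GammaPI_eq: "GammaPI = {(Bxy, pmul Bxy (omega_pt Bxy (pmul Bxy gen_x gen_y)) gen_x, gen_x)}"
  unfolding GammaPI_def Let_def using omega_eq_omega_pt[OF pmul_Omega[OF gen_xy_Omega]] by simp

lemma wf_SigmaPI: "wf_pseudoidentities SigmaPI"
  unfolding wf_pseudoidentities_def SigmaPI_eq
  using gen_xy_Omega by (auto intro!: omega_pt_Omega pmul_Omega)

lemma wf_GammaPI: "wf_pseudoidentities GammaPI"
  unfolding wf_pseudoidentities_def GammaPI_eq
  using gen_xy_Omega by (auto intro!: omega_pt_Omega pmul_Omega)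

lemma models_rect_band_SigmaPI:
  assumes A: "finite A" shows "models (rect_band A) SigmaPI"
proof -
  let ?L = "rect_band A"
  have L: "fin_sg ?L" by (rule fin_sg_rect_band[OF A])
  have x: "gen_x ?L \<psi> \<in> fst ?L" if "adm Bxy ?L \<psi>" for \<psi> using OmegaD(1)[OF gen_xy_Omega(1) that] .
  have "holds_in ?L Bxy (omega_pt Bxy (pmul Bxy (pmul Bxy gen_x gen_y) gen_x)) (omega_pt Bxy gen_x)"
    using x rect_band_absorb rect_band_idem sg_pow_idem gen_xy_Omega
    by (intro holds_inI[OF L]) (simp_all add: omega_pt_adm pmul_adm omega_pt_Omega pmul_Omega)
  moreover have "holds_in ?L Bxy (pmul Bxy (omega_pt Bxy gen_x) gen_x) gen_x"
    using x rect_band_idem sg_pow_idem gen_xy_Omega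
    by (intro holds_inI[OF L]) (simp_all add: omega_pt_adm pmul_adm omega_pt_Omega pmul_Omega)
  ultimately show ?thesis unfolding models_def SigmaPI_eq using L by simp
qed

lemma models_rect_band_GammaPI:
  assumes A: "finite A" shows "models (rect_band A) GammaPI"
proof -
  let ?L = "rect_band A"
  have L: "fin_sg ?L" by (rule fin_sg_rect_band[OF A])
  have xy: "snd ?L (gen_x ?L \<psi>) (gen_y ?L \<psi>) \<in> fst ?L" "gen_x ?L \<psi> \<in> fst ?L"
    if "adm Bxy ?L \<psi>" for \<psi>
    using fin_sgD(2)[OF L] OmegaD(1)[OF gen_xy_Omega(1) that] OmegaD(1)[OF gen_xy_Omega(2) that]
    by auto
  have "holds_in ?L Bxy (pmul Bxy (omega_pt Bxy (pmul Bxy gen_x gen_y)) gen_x) gen_x"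
    using xy rect_band_absorb rect_band_idem sg_pow_idem gen_xy_Omega
    by (intro holds_inI[OF L]) (simp_all add: omega_pt_adm pmul_adm omega_pt_Omega pmul_Omega)
  then show ?thesis unfolding models_def GammaPI_eq using L by simp
qed

definition pair_subst :: "'a pw \<Rightarrow> 'a pw \<Rightarrow> nat \<Rightarrow> 'a pw" where
  "pair_subst p q = (\<lambda>b. if b = 0 then p else q)"

lemma pair_subst_Omega: "p \<in> Omega A \<Longrightarrow> q \<in> Omega A \<Longrightarrow> \<forall>b\<in>Bxy. pair_subst p q b \<in> Omega A"
  unfolding pair_subst_def by simp

lemma subst_pw_pair_subst:
  assumes "p \<in> Omega A" "q \<in> Omega A"
  shows "subst_pw A Bxy (pair_subst p q) gen_x = p" "subst_pw A Bxy (pair_subst p q) gen_y = q"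
  using subst_pw_gen[OF pair_subst_Omega[OF assms] Bxy_mem(1)]
    subst_pw_gen[OF pair_subst_Omega[OF assms] Bxy_mem(2)]
  unfolding pair_subst_def by simp_all

lemma GammaPI_provable:
  assumes p: "p \<in> Omega A" and q: "q \<in> Omega A"
  shows "(pmul A (omega_pt A (pmul A p q)) p, p) \<in> provable_rel GammaPI A"
proof -
  let ?f = "subst_pw A Bxy (pair_subst p q)"
  note g = pair_subst_Omega[OF p q]
  have "(?f (pmul Bxy (omega_pt Bxy (pmul Bxy gen_x gen_y)) gen_x), ?f gen_x) \<in> provable_rel GammaPI A"
    by (rule provable_rel_instance[OF _ cont_hom_subst_pw[OF g] p]) (simp add: GammaPI_eq)
  then show ?thesis
    using gen_xy_Omega subst_pw_pair_subst[OF p q]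
    by (simp add: subst_pw_pmul[OF g] subst_pw_omega_pt[OF g] pmul_Omega omega_pt_Omega)
qed

lemma SigmaPI_provable:
  assumes p: "p \<in> Omega A" and q: "q \<in> Omega A"
  shows "(omega_pt A (pmul A (pmul A p q) p), omega_pt A p) \<in> provable_rel SigmaPI A"
    and "(pmul A (omega_pt A p) p, p) \<in> provable_rel SigmaPI A"
proof -
  let ?f = "subst_pw A Bxy (pair_subst p q)"
  note g = pair_subst_Omega[OF p q]
  have "(?f (omega_pt Bxy (pmul Bxy (pmul Bxy gen_x gen_y) gen_x)), ?f (omega_pt Bxy gen_x))
      \<in> provable_rel SigmaPI A"
    "(?f (pmul Bxy (omega_pt Bxy gen_x) gen_x), ?f gen_x) \<in> provable_rel SigmaPI A"
    by (rule provable_rel_instance[OF _ cont_hom_subst_pw[OF g] p], simp add: SigmaPI_eq)+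
  then show "(omega_pt A (pmul A (pmul A p q) p), omega_pt A p) \<in> provable_rel SigmaPI A"
    "(pmul A (omega_pt A p) p, p) \<in> provable_rel SigmaPI A"
    using gen_xy_Omega subst_pw_pair_subst[OF p q]
    by (simp_all add: subst_pw_pmul[OF g] subst_pw_omega_pt[OF g] pmul_Omega omega_pt_Omega)
qed

text \<open>With \<open>u = xy\<close>, \<open>w = ux\<close> and \<open>m = x w\<^bsup>\<omega>-1\<^esup> x\<close> (so that \<open>w\<^sup>\<omega> x = u m\<close>):
  \<open>u\<^sup>\<omega> x \<turnstile> u\<^sup>\<omega> x\<^sup>\<omega> x \<turnstile> u\<^sup>\<omega> w\<^sup>\<omega> x = u\<^sup>\<omega> u m \<turnstile> u m = w\<^sup>\<omega> x \<turnstile> x\<^sup>\<omega> x \<turnstile> x\<close>.\<close>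

lemma SigmaPI_provable_gamma:
  assumes x: "x \<in> Omega A" and y: "y \<in> Omega A"
  shows "(pmul A (omega_pt A (pmul A x y)) x, x) \<in> provable_rel SigmaPI A"
proof -
  let ?P = "provable_rel SigmaPI A"
  define u where "u = pmul A x y"
  define w where "w = pmul A u x"
  define m where "m = pmul A (pmul A x (omega_pred_pt A w)) x"
  have uO: "u \<in> Omega A" and wO: "w \<in> Omega A" and mO: "m \<in> Omega A"
    unfolding m_def w_def u_def using x y by (simp_all add: pmul_Omega omega_pred_pt_Omega)
  have uwO: "omega_pt A u \<in> Omega A" "omega_pt A w \<in> Omega A" "omega_pt A x \<in> Omega A"
    using uO wO x by (simp_all add: omega_pt_Omega)
  note pmul_l = provable_rel_pmul(1)[OF wf_SigmaPI] and pmul_r = provable_rel_pmul(2)[OF wf_SigmaPI]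
  note sym = provable_rel_sym[OF wf_SigmaPI] and trans = provable_rel_trans
  have xyx: "(omega_pt A w, omega_pt A x) \<in> ?P"
    unfolding w_def u_def by (rule SigmaPI_provable(1)[OF x y])
  have xpow: "(pmul A (omega_pt A x) x, x) \<in> ?P" by (rule SigmaPI_provable(2)[OF x x])
  have wm: "pmul A (omega_pt A w) x = pmul A u m"
    using pmul_omega_pred_pt(1)[OF wO] pmul_assoc[OF uO x omega_pred_pt_Omega[OF wO]]
      pmul_assoc[OF uO pmul_Omega[OF x omega_pred_pt_Omega[OF wO]] x]
    unfolding m_def w_def by simp
  have "(pmul A (omega_pt A u) x, pmul A (omega_pt A u) (pmul A (omega_pt A w) x)) \<in> ?P"
    using trans[OF pmul_l[OF sym[OF xpow] uwO(1)] pmul_l[OF pmul_r[OF sym[OF xyx] x] uwO(1)]] .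
  also have "pmul A (omega_pt A u) (pmul A (omega_pt A w) x) = pmul A (pmul A (omega_pt A u) u) m"
    unfolding wm by (rule pmul_assoc[OF uwO(1) uO mO, symmetric])
  finally have "(pmul A (omega_pt A u) x, pmul A (omega_pt A w) x) \<in> ?P"
    using trans pmul_r[OF SigmaPI_provable(2)[OF uO uO] mO] wm by metis
  then have "(pmul A (omega_pt A u) x, x) \<in> ?P"
    using trans[OF _ trans[OF pmul_r[OF xyx x] xpow]] by blast
  then show ?thesis unfolding u_def .
qed

theorem theorem9p3:
  shows "h_strong SigmaPI \<and> h_strong GammaPI"
proof
  show "h_strong SigmaPI"
    using wf_SigmaPI models_rect_band_SigmaPI SigmaPI_provable_gamma
    by (intro h_strongI) (auto simp: SigmaPI_eq)
  show "h_strong GammaPI"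
    using wf_GammaPI models_rect_band_GammaPI GammaPI_provable
    by (intro h_strongI) (auto simp: GammaPI_eq)
qed

end
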